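(* Assume Condition (C) and $\lambda/2<h<\lambda$. If $\eta\in\mathcal M_{n^+_c}$ contains a cluster of pluses whose shape is not a quasi-square with side lengths $l_c$ and $l_c-1$, then $\eta$ is not a minimizer of $H$ on $\mathcal M_{n^+_c}$.
   Context: Let $\Lambda=\{1,\dots,L\}^2$, $\mathcal X=\{-1,0,+1\}^\Lambda$, $\partial^-\Lambda$ the sites of $\Lambda$ with a nearest neighbour outside $\Lambda$. Hamiltonian: $H(\eta)=\frac J2\sum_{i,j\in\Lambda,|i-j|=1}[\eta(i)-\eta(j)]^2+J\sum_{i\in\partial^-\Lambda}\sum_{j\notin\Lambda,|i-j|=1}\eta(i)^2-\lambda\sum_{i}\eta(i)^2-h\sum_i\eta(i)$. Condition (C): $J$ sufficiently large compared to $\lambda,h>0$; $L>(2J/(\lambda-h))^3$; none of $\tfrac{2J}{\lambda+h},\tfrac{2J}{\lambda-h},\tfrac{2J+\lambda-h}{\lambda+h},\tfrac{J+\lambda+h}{h}$ is an integer. Let $l_c=\lfloor\frac{2J+\lambda-h}{2h}\rfloor+1$ and $n^+_c=l_c(l_c-1)$. $\mathcal M_n$ is the set of configurations with exactly $n$ sites of spin $+1$. Clusters of pluses are the maximal connected components of the union of the closed unit squares centred at sites with spin $+1$. A quasi-square is a rectangle (of sites) with side lengths $n$ and $n+1$. *)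

theory Defs
  imports "HOL-Analysis.Analysis"
begin

type_synonym site = "int \<times> int"

definition Lam :: "nat \<Rightarrow> site set" where
  "Lam L = {1..int L} \<times> {1..int L}"

definition nn :: "site \<Rightarrow> site \<Rightarrow> bool" where
  "nn i j \<longleftrightarrow> \<bar>fst i - fst j\<bar> + \<bar>snd i - snd j\<bar> = 1"

definition inner_bdry :: "nat \<Rightarrow> site set" where
  "inner_bdry L = {i \<in> Lam L. \<exists>j. j \<notin> Lam L \<and> nn i j}"

text \<open>Configurations: spins in {-1,0,+1} on Lambda (normalised to 0 outside Lambda,
  which carries no information).\<close>
definition configs :: "nat \<Rightarrow> (site \<Rightarrow> int) set" where
  "configs L = {\<eta>. (\<forall>i\<in>Lam L. \<eta> i \<in> {-1, 0, 1}) \<and> (\<forall>i. i \<notin> Lam L \<longrightarrow> \<eta> i = 0)}"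

definition Ham :: "nat \<Rightarrow> real \<Rightarrow> real \<Rightarrow> real \<Rightarrow> (site \<Rightarrow> int) \<Rightarrow> real" where
  "Ham L J lam h \<eta> =
     J / 2 * (\<Sum>p\<in>{(i, j). i \<in> Lam L \<and> j \<in> Lam L \<and> nn i j}.
                  (of_int (\<eta> (fst p)) - of_int (\<eta> (snd p)))\<^sup>2)
   + J * (\<Sum>i\<in>inner_bdry L. \<Sum>j\<in>{j. j \<notin> Lam L \<and> nn i j}. (of_int (\<eta> i))\<^sup>2)
   - lam * (\<Sum>i\<in>Lam L. (of_int (\<eta> i))\<^sup>2)
   - h * (\<Sum>i\<in>Lam L. of_int (\<eta> i))"

definition Mn :: "nat \<Rightarrow> nat \<Rightarrow> (site \<Rightarrow> int) set" where
  "Mn L n = {\<eta> \<in> configs L. card {i \<in> Lam L. \<eta> i = 1} = n}"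

definition is_minimizer_on :: "nat \<Rightarrow> real \<Rightarrow> real \<Rightarrow> real \<Rightarrow> (site \<Rightarrow> int) set \<Rightarrow> (site \<Rightarrow> int) \<Rightarrow> bool" where
  "is_minimizer_on L J lam h M \<eta> \<longleftrightarrow> \<eta> \<in> M \<and> (\<forall>\<xi>\<in>M. Ham L J lam h \<eta> \<le> Ham L J lam h \<xi>)"

definition usq :: "site \<Rightarrow> (real \<times> real) set" where
  "usq i = {x. \<bar>fst x - of_int (fst i)\<bar> \<le> 1/2 \<and> \<bar>snd x - of_int (snd i)\<bar> \<le> 1/2}"

definition plus_sites :: "nat \<Rightarrow> (site \<Rightarrow> int) \<Rightarrow> site set" where
  "plus_sites L \<eta> = {i \<in> Lam L. \<eta> i = 1}"

definition plus_region :: "nat \<Rightarrow> (site \<Rightarrow> int) \<Rightarrow> (real \<times> real) set" where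
  "plus_region L \<eta> = (\<Union>i\<in>plus_sites L \<eta>. usq i)"

definition clusters :: "nat \<Rightarrow> (site \<Rightarrow> int) \<Rightarrow> (real \<times> real) set set" where
  "clusters L \<eta> = {connected_component_set (plus_region L \<eta>) x | x. x \<in> plus_region L \<eta>}"

definition cluster_sites :: "nat \<Rightarrow> (site \<Rightarrow> int) \<Rightarrow> (real \<times> real) set \<Rightarrow> site set" where
  "cluster_sites L \<eta> C = {i \<in> plus_sites L \<eta>. usq i \<subseteq> C}"

definition site_rect :: "int \<Rightarrow> int \<Rightarrow> int \<Rightarrow> int \<Rightarrow> site set" where
  "site_rect a b m k = {a..a + m - 1} \<times> {b..b + k - 1}"

definition quasi_square_l :: "int \<Rightarrow> site set \<Rightarrow> bool" where
  "quasi_square_l l S \<longleftrightarrow> (\<exists>a b. S = site_rect a b l (l - 1) \<or> S = site_rect a b (l - 1) l)"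

definition l_c :: "real \<Rightarrow> real \<Rightarrow> real \<Rightarrow> int" where
  "l_c J lam h = \<lfloor>(2 * J + lam - h) / (2 * h)\<rfloor> + 1"

definition n_c_plus :: "real \<Rightarrow> real \<Rightarrow> real \<Rightarrow> nat" where
  "n_c_plus J lam h = nat (l_c J lam h * (l_c J lam h - 1))"

text \<open>The non-asymptotic part of Condition (C).\<close>
definition cond_C_rest :: "nat \<Rightarrow> real \<Rightarrow> real \<Rightarrow> real \<Rightarrow> bool" where
  "cond_C_rest L J lam h \<longleftrightarrow>
     0 < lam \<and> 0 < h \<and> real L > (2 * J / (lam - h)) ^ 3 \<and>
     2 * J / (lam + h) \<notin> \<int> \<and> 2 * J / (lam - h) \<notin> \<int> \<and>
     (2 * J + lam - h) / (lam + h) \<notin> \<int> \<and> (J + lam + h) / h \<notin> \<int>"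

end

(*
  Up to a term fixed by the number of pluses, the Hamiltonian equals J times the
  excess energy of the rows and columns, each read as a one-dimensional chain of spins with zero
  boundary values, plus (lam - h) times the number of zeros.  A chain containing a plus and a minus
  has energy at least 4, and at least 5 if it contains no zero or its pluses do not form an
  interval.  If L is large, an empty line or a line without minus costs too many zeros.
  Otherwise, if the pluses meet r rows and c columns, then rc >= l (l - 1) forces r + c >= 2 l - 1,
  every tight line (energy 4) needs a zero, and a zero serves both a tight row and a tight column
  only at a site of the bounding rectangle outside the plus set.  This gives the lower bound
  (2 J + lam - h) (2 l - 1), attained by an l x (l - 1) rectangle of pluses bordered by a row and
  a column of zeros.  Equality forces r + c = 2 l - 1, all lines tight and the pluses to fill the
  bounding rectangle, which is then a quasi-square and the only cluster.
*)
theory Submission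
  imports Defs
begin

section \<open>One-dimensional spin chains\<close>

definition line_energy :: "(nat \<Rightarrow> int) \<Rightarrow> nat \<Rightarrow> nat \<Rightarrow> int" where
  "line_energy f a b = (\<Sum>x\<in>{a..<b}. (f (Suc x) - f x)\<^sup>2)"

lemma line_energy_split:
  "a \<le> b \<Longrightarrow> b \<le> c \<Longrightarrow> line_energy f a c = line_energy f a b + line_energy f b c"
  unfolding line_energy_def by (simp add: sum.atLeastLessThan_concat)

lemma line_energy_Suc: "line_energy f a (Suc a) = (f (Suc a) - f a)\<^sup>2"
  unfolding line_energy_def by simp

lemma line_energy_nonneg: "0 \<le> line_energy f a b"
  unfolding line_energy_def by (intro sum_nonneg) simp

lemma line_energy_const: "(\<And>x. a \<le> x \<Longrightarrow> x \<le> b \<Longrightarrow> f x = c) \<Longrightarrow> line_energy f a b = 0"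
  unfolding line_energy_def by (intro sum.neutral) auto

lemma abs_le_power2_int: "\<bar>z\<bar> \<le> (z::int)\<^sup>2"
proof (cases "z = 0")
  case False
  then have "\<bar>z\<bar> * 1 \<le> \<bar>z\<bar> * \<bar>z\<bar>" by (intro mult_left_mono) auto
  then show ?thesis by (simp add: power2_eq_square abs_mult_self_eq)
qed simp

lemma line_energy_ge_abs_diff: "a \<le> b \<Longrightarrow> \<bar>f b - f a\<bar> \<le> line_energy f a b"
proof (induction b rule: dec_induct)
  case (step b)
  have "line_energy f a (Suc b) = line_energy f a b + (f (Suc b) - f b)\<^sup>2"
    using step line_energy_split[of a b "Suc b" f] by (simp add: line_energy_Suc)
  then show ?case using step abs_le_power2_int[of "f (Suc b) - f b"] by linarith
qed (simp add: line_energy_def)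

lemma line_energy_ge_chain:
  "sorted (a # ps) \<Longrightarrow> (\<Sum>(x, y)\<leftarrow>zip (a # ps) ps. \<bar>f y - f x\<bar>) \<le> line_energy f a (last (a # ps))"
proof (induction ps arbitrary: a)
  case (Cons p ps)
  then have "(\<Sum>(x, y)\<leftarrow>zip (p # ps) ps. \<bar>f y - f x\<bar>) \<le> line_energy f p (last (p # ps))"
    by simp
  moreover have "p \<le> last (p # ps)" using Cons.prems by (cases ps) (auto simp: sorted_wrt_append)
  moreover have "\<bar>f p - f a\<bar> \<le> line_energy f a p" using Cons.prems by (intro line_energy_ge_abs_diff) simp
  ultimately show ?case using Cons.prems line_energy_split[of a p "last (p # ps)" f] by simp
qed (simp add: line_energy_nonneg)

lemma exists_jump:
  "a \<le> b \<Longrightarrow> f a \<noteq> f b \<Longrightarrow> \<exists>x. a \<le> x \<and> x < b \<and> f (Suc x) \<noteq> f x"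
proof (induction b rule: dec_induct)
  case (step b)
  then show ?case by (cases "f a = f b") (auto intro: less_SucI)
qed simp

definition spin_line :: "(nat \<Rightarrow> int) \<Rightarrow> nat \<Rightarrow> bool" where
  "spin_line f L \<longleftrightarrow> f 0 = 0 \<and> f (Suc L) = 0 \<and> (\<forall>x. 1 \<le> x \<and> x \<le> L \<longrightarrow> f x \<in> {-1, 0, 1})"

lemma spin_line_energy_ge_2:
  assumes "spin_line f L" "1 \<le> x" "x \<le> L" "f x \<noteq> 0"
  shows "2 \<le> line_energy f 0 (Suc L)"
  using line_energy_ge_chain[of 0 "[x, Suc L]" f] assms unfolding spin_line_def by auto

lemma spin_line_energy_ge_4:
  assumes "spin_line f L" "1 \<le> a" "a \<le> L" "1 \<le> b" "b \<le> L" "f a = 1" "f b = -1"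
  shows "4 \<le> line_energy f 0 (Suc L)"
proof (cases "a < b")
  case True
  then show ?thesis using line_energy_ge_chain[of 0 "[a, b, Suc L]" f] assms
    unfolding spin_line_def by auto
next
  case False
  then have "b < a" using assms by (cases "a = b") auto
  then show ?thesis using line_energy_ge_chain[of 0 "[b, a, Suc L]" f] assms
    unfolding spin_line_def by auto
qed

lemma spin_line_energy_ge_5_if_no_zero:
  assumes "spin_line f L" "1 \<le> a" "a \<le> L" "1 \<le> b" "b \<le> L" "f a = 1" "f b = -1"
    and no_zero: "\<And>x. 1 \<le> x \<Longrightarrow> x \<le> L \<Longrightarrow> f x \<noteq> 0"
  shows "5 \<le> line_energy f 0 (Suc L)"
proof -
  have "min a b \<le> max a b" "f (min a b) \<noteq> f (max a b)" using assms by (auto simp: min_def max_def)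
  then obtain x where x: "min a b \<le> x" "x < max a b" "f (Suc x) \<noteq> f x"
    using exists_jump by blast
  have range: "1 \<le> x" "Suc x \<le> L" using x assms by auto
  have "f x \<in> {-1, 0, 1}" "f (Suc x) \<in> {-1, 0, 1}"
    using range assms(1) unfolding spin_line_def by auto
  then have "f x = 1 \<and> f (Suc x) = -1 \<or> f x = -1 \<and> f (Suc x) = 1"
    using range no_zero[of x] no_zero[of "Suc x"] x(3) by auto
  then have "\<bar>f x\<bar> = 1" "\<bar>f (Suc x)\<bar> = 1" "line_energy f x (Suc x) = 4"
    by (auto simp: line_energy_Suc)
  moreover have "\<bar>f x - f 0\<bar> \<le> line_energy f 0 x" "\<bar>f (Suc L) - f (Suc x)\<bar> \<le> line_energy f (Suc x) (Suc L)"
    using range by (auto intro: line_energy_ge_abs_diff)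
  moreover have "line_energy f 0 (Suc L) = line_energy f 0 x + line_energy f x (Suc x) + line_energy f (Suc x) (Suc L)"
    using range line_energy_split[of 0 x "Suc L" f] line_energy_split[of x "Suc x" "Suc L" f] by simp
  moreover have "f 0 = 0" "f (Suc L) = 0" using assms(1) unfolding spin_line_def by auto
  ultimately show ?thesis by linarith
qed

lemma spin_line_energy_ge_5_if_plus_gap:
  assumes "spin_line f L" "1 \<le> x1" "x1 < x2" "x2 < x3" "x3 \<le> L" "f x1 = 1" "f x3 = 1" "f x2 \<noteq> 1"
    "1 \<le> m" "m \<le> L" "f m = -1"
  shows "5 \<le> line_energy f 0 (Suc L)"
proof -
  have ends: "f 0 = 0" "f (Suc L) = 0" using assms(1) unfolding spin_line_def by auto
  have "1 \<le> x2" "x2 \<le> L" using assms by auto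
  then have "f x2 \<in> {-1, 0, 1}" using assms(1) unfolding spin_line_def by blast
  then have gap: "1 \<le> \<bar>f x2 - 1\<bar>" using assms(8) by auto
  have "m \<noteq> x1" "m \<noteq> x3" using assms by auto
  then consider "m < x1" | "x1 < m" "m < x3" | "x3 < m" by linarith
  then show ?thesis
  proof cases
    case 1
    then have "\<bar>f m - f 0\<bar> + (\<bar>f x1 - f m\<bar> + (\<bar>f x2 - f x1\<bar> + (\<bar>f x3 - f x2\<bar> + \<bar>f (Suc L) - f x3\<bar>)))
        \<le> line_energy f 0 (Suc L)"
      using line_energy_ge_chain[of 0 "[m, x1, x2, x3, Suc L]" f] assms by simp
    then show ?thesis using assms ends gap by (simp add: abs_minus_commute)
  next
    case 2
    then have "\<bar>f x1 - f 0\<bar> + (\<bar>f m - f x1\<bar> + (\<bar>f x3 - f m\<bar> + \<bar>f (Suc L) - f x3\<bar>))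
        \<le> line_energy f 0 (Suc L)"
      using line_energy_ge_chain[of 0 "[x1, m, x3, Suc L]" f] assms by simp
    then show ?thesis using assms ends by simp
  next
    case 3
    then have "\<bar>f x1 - f 0\<bar> + (\<bar>f x2 - f x1\<bar> + (\<bar>f x3 - f x2\<bar> + (\<bar>f m - f x3\<bar> + \<bar>f (Suc L) - f m\<bar>)))
        \<le> line_energy f 0 (Suc L)"
      using line_energy_ge_chain[of 0 "[x1, x2, x3, m, Suc L]" f] assms by simp
    then show ?thesis using assms ends gap by (simp add: abs_minus_commute)
  qed
qed
lemma line_energy_one_step:
  assumes "p < L" "\<And>x. x \<le> p \<Longrightarrow> f x = 0" "\<And>x. p < x \<Longrightarrow> x \<le> L \<Longrightarrow> f x = w" "f (Suc L) = 0"
  shows "line_energy f 0 (Suc L) = 2 * w\<^sup>2"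
proof -
  have "line_energy f 0 (Suc L)
      = line_energy f 0 p + line_energy f p (Suc p) + line_energy f (Suc p) L + line_energy f L (Suc L)"
    using assms line_energy_split[of 0 p "Suc L" f] line_energy_split[of p "Suc p" "Suc L" f]
      line_energy_split[of "Suc p" L "Suc L" f]
    by simp
  moreover have "line_energy f 0 p = 0" "line_energy f (Suc p) L = 0"
    using assms by (auto intro: line_energy_const)
  moreover have "line_energy f p (Suc p) = w\<^sup>2" "line_energy f L (Suc L) = w\<^sup>2"
    using assms line_energy_Suc[of f p] line_energy_Suc[of f L] by (simp_all add: power2_commute)
  ultimately show ?thesis by simp
qed

lemma line_energy_two_steps:
  assumes "1 \<le> p" "Suc (Suc p) \<le> L" "f 0 = 0" "\<And>x. 1 \<le> x \<Longrightarrow> x \<le> p \<Longrightarrow> f x = u" "f (Suc p) = 0"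
    "\<And>x. Suc p < x \<Longrightarrow> x \<le> L \<Longrightarrow> f x = w" "f (Suc L) = 0"
  shows "line_energy f 0 (Suc L) = 2 * u\<^sup>2 + 2 * w\<^sup>2"
proof -
  have "line_energy f 0 (Suc L) = line_energy f 0 1 + line_energy f 1 p + line_energy f p (Suc p)
      + line_energy f (Suc p) (Suc (Suc p)) + line_energy f (Suc (Suc p)) L + line_energy f L (Suc L)"
    using assms line_energy_split[of 0 1 "Suc L" f] line_energy_split[of 1 p "Suc L" f]
      line_energy_split[of p "Suc p" "Suc L" f] line_energy_split[of "Suc p" "Suc (Suc p)" "Suc L" f]
      line_energy_split[of "Suc (Suc p)" L "Suc L" f]
    by simp
  moreover have "line_energy f 1 p = 0" "line_energy f (Suc (Suc p)) L = 0"
    using assms by (auto intro: line_energy_const)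
  moreover have "line_energy f 0 1 = u\<^sup>2" "line_energy f p (Suc p) = u\<^sup>2"
    "line_energy f (Suc p) (Suc (Suc p)) = w\<^sup>2" "line_energy f L (Suc L) = w\<^sup>2"
    using assms line_energy_Suc[of f 0] line_energy_Suc[of f p] line_energy_Suc[of f "Suc p"]
      line_energy_Suc[of f L]
    by (simp_all add: power2_commute)
  ultimately show ?thesis by simp
qed

section \<open>The Hamiltonian as a sum of line energies\<close>

lemma nn_iff: "nn (x, y) j \<longleftrightarrow> j \<in> {(x + 1, y), (x - 1, y), (x, y + 1), (x, y - 1)}"
  by (cases j) (auto simp: nn_def abs_if split: if_splits)

lemma mem_Lam_iff: "(x, y) \<in> Lam L \<longleftrightarrow> 1 \<le> x \<and> x \<le> int L \<and> 1 \<le> y \<and> y \<le> int L"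
  by (auto simp: Lam_def)

lemma finite_Lam [simp]: "finite (Lam L)"
  by (simp add: Lam_def)

lemma card_Lam: "card (Lam L) = L * L"
  unfolding Lam_def by (simp add: card_cartesian_product)

lemma configs_outside: "\<eta> \<in> configs L \<Longrightarrow> i \<notin> Lam L \<Longrightarrow> \<eta> i = 0"
  by (cases i) (auto simp: configs_def)

lemma sum_four_neighbours:
  fixes x y :: int
  shows "(\<Sum>j\<in>{(x + 1, y), (x - 1, y), (x, y + 1), (x, y - 1)}. g j)
    = g (x + 1, y) + g (x - 1, y) + g (x, y + 1) + (g (x, y - 1) :: int)"
proof -
  have "(x + 1, y) \<notin> {(x - 1, y), (x, y + 1), (x, y - 1)}" "(x - 1, y) \<notin> {(x, y + 1), (x, y - 1)}"
    "(x, y + 1) \<notin> {(x, y - 1)}"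
    by auto
  then show ?thesis by (simp add: add.assoc)
qed

definition transposed :: "(site \<Rightarrow> int) \<Rightarrow> site \<Rightarrow> int" where
  "transposed \<eta> = (\<lambda>(x, y). \<eta> (y, x))"

lemma transposed_apply [simp]: "transposed \<eta> (a, b) = \<eta> (b, a)"
  by (simp add: transposed_def)

lemma transposed_configs: "\<eta> \<in> configs L \<Longrightarrow> transposed \<eta> \<in> configs L"
  unfolding configs_def transposed_def Lam_def by auto

text \<open>A bond leaving \<open>Lam L\<close> is counted twice: in \<open>Ham\<close> the boundary term has weight \<open>J\<close>, while
  the bulk sum runs over ordered pairs with weight \<open>J / 2\<close>.\<close>
definition horizontal_bond_energy :: "nat \<Rightarrow> (site \<Rightarrow> int) \<Rightarrow> site \<Rightarrow> int" where
  "horizontal_bond_energy L \<eta> i =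
     (\<eta> i - \<eta> (fst i + 1, snd i))\<^sup>2 + (if fst i = int L then (\<eta> i)\<^sup>2 else 0)
   + (\<eta> i - \<eta> (fst i - 1, snd i))\<^sup>2 + (if fst i = 1 then (\<eta> i)\<^sup>2 else 0)"

lemma site_bond_energy_eq:
  assumes "\<eta> \<in> configs L" "i \<in> Lam L"
  shows "(\<Sum>j\<in>{j\<in>Lam L. nn i j}. (\<eta> i - \<eta> j)\<^sup>2) + 2 * (\<Sum>j\<in>{j. j \<notin> Lam L \<and> nn i j}. (\<eta> i)\<^sup>2)
    = horizontal_bond_energy L \<eta> i + horizontal_bond_energy L (transposed \<eta>) (snd i, fst i)"
proof -
  obtain x y where i: "i = (x, y)" by (cases i)
  let ?N = "{(x + 1, y), (x - 1, y), (x, y + 1), (x, y - 1)}"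
  have in_N: "{j\<in>Lam L. nn i j} = ?N \<inter> Lam L" and out_N: "{j. j \<notin> Lam L \<and> nn i j} = ?N \<inter> {j. j \<notin> Lam L}"
    using i nn_iff by auto
  have inside: "(\<Sum>j\<in>{j\<in>Lam L. nn i j}. (\<eta> i - \<eta> j)\<^sup>2) = (\<Sum>j\<in>?N. if j \<in> Lam L then (\<eta> i - \<eta> j)\<^sup>2 else 0)"
    unfolding in_N by (rule sum.inter_restrict) simp
  have outside: "(\<Sum>j\<in>{j. j \<notin> Lam L \<and> nn i j}. (\<eta> i)\<^sup>2) = (\<Sum>j\<in>?N. if j \<notin> Lam L then (\<eta> i)\<^sup>2 else 0)"
    unfolding out_N by (simp add: sum.inter_restrict)
  have "1 \<le> x" "x \<le> int L" "1 \<le> y" "y \<le> int L" using assms(2) i mem_Lam_iff by auto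
  then have "(x + 1, y) \<in> Lam L \<longleftrightarrow> x \<noteq> int L" "(x - 1, y) \<in> Lam L \<longleftrightarrow> x \<noteq> 1"
    "(x, y + 1) \<in> Lam L \<longleftrightarrow> y \<noteq> int L" "(x, y - 1) \<in> Lam L \<longleftrightarrow> y \<noteq> 1"
    using mem_Lam_iff by auto
  then show ?thesis
    unfolding inside outside sum_four_neighbours unfolding horizontal_bond_energy_def i
    using configs_outside[OF assms(1), of "(x + 1, y)"] configs_outside[OF assms(1), of "(x - 1, y)"]
      configs_outside[OF assms(1), of "(x, y + 1)"] configs_outside[OF assms(1), of "(x, y - 1)"]
    by (auto simp: power2_eq_square algebra_simps)
qed

text \<open>Positions \<open>0\<close> and \<open>L + 1\<close> of the chain lie outside \<open>Lam L\<close>, where configurations vanish;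
  they supply the zero boundary values.\<close>
definition row_energy :: "nat \<Rightarrow> (site \<Rightarrow> int) \<Rightarrow> int \<Rightarrow> int" where
  "row_energy L \<eta> y = line_energy (\<lambda>x. \<eta> (int x, y)) 0 (Suc L)"

lemma sum_int_atLeastAtMost_nat: "(\<Sum>x\<in>{1..int L}. g x) = (\<Sum>k\<in>{1..L}. g (int k))"
proof -
  have "{1..int L} = int ` {1..L}" by (simp add: image_int_atLeastAtMost)
  then show ?thesis by (simp add: sum.reindex)
qed

lemma sum_horizontal_bond_energy_row:
  assumes "\<eta> \<in> configs L" "1 \<le> L" "1 \<le> y" "y \<le> int L"
  shows "(\<Sum>x\<in>{1..int L}. horizontal_bond_energy L \<eta> (x, y)) = 2 * row_energy L \<eta> y"
proof -
  define f where "f k = \<eta> (int k, y)" for k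
  have f0: "f 0 = 0" "f (Suc L) = 0"
    unfolding f_def using configs_outside[OF assms(1)] mem_Lam_iff by auto
  have "(\<Sum>x\<in>{1..int L}. horizontal_bond_energy L \<eta> (x, y))
      = (\<Sum>k\<in>{1..L}. (f k - f (Suc k))\<^sup>2 + (if k = L then (f k)\<^sup>2 else 0)
          + (f k - f (k - 1))\<^sup>2 + (if k = 1 then (f k)\<^sup>2 else 0))"
    unfolding sum_int_atLeastAtMost_nat
  proof (rule sum.cong)
    fix k assume "k \<in> {1..L}"
    then have e: "int (k - 1) = int k - 1" "int (Suc k) = int k + 1" by auto
    show "horizontal_bond_energy L \<eta> (int k, y) = (f k - f (Suc k))\<^sup>2 + (if k = L then (f k)\<^sup>2 else 0)
          + (f k - f (k - 1))\<^sup>2 + (if k = 1 then (f k)\<^sup>2 else 0)"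
      unfolding horizontal_bond_energy_def f_def e fst_conv snd_conv of_nat_eq_iff of_nat_eq_1_iff
      by (rule refl)
  qed simp
  also have "\<dots> = (\<Sum>k\<in>{1..L}. (f k - f (Suc k))\<^sup>2) + (f L)\<^sup>2 + (\<Sum>k\<in>{1..L}. (f k - f (k - 1))\<^sup>2) + (f 1)\<^sup>2"
    using assms(2) by (simp add: sum.distrib sum.delta')
  also have "(\<Sum>k\<in>{1..L}. (f k - f (Suc k))\<^sup>2) = line_energy f 1 (Suc L)"
    unfolding line_energy_def by (intro sum.cong) (auto simp: power2_commute)
  also have "(\<Sum>k\<in>{1..L}. (f k - f (k - 1))\<^sup>2) = line_energy f 0 L"
    unfolding line_energy_def by (rule sum.reindex_bij_witness[of _ Suc "\<lambda>k. k - 1"]) auto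
  finally show ?thesis
    using assms(2) f0 line_energy_split[of 0 1 "Suc L" f] line_energy_split[of 0 L "Suc L" f]
      line_energy_Suc[of f 0] line_energy_Suc[of f L]
    unfolding row_energy_def f_def[symmetric] by (simp add: power2_commute)
qed

lemma sum_Lam_rows: "(\<Sum>i\<in>Lam L. g i) = (\<Sum>y\<in>{1..int L}. \<Sum>x\<in>{1..int L}. g (x, y))"
proof -
  have "(\<Sum>i\<in>Lam L. g i) = (\<Sum>x\<in>{1..int L}. \<Sum>y\<in>{1..int L}. g (x, y))"
    unfolding Lam_def sum.cartesian_product by (simp add: case_prod_beta')
  also have "\<dots> = (\<Sum>y\<in>{1..int L}. \<Sum>x\<in>{1..int L}. g (x, y))" by (rule sum.swap)
  finally show ?thesis .
qed

lemma sum_Lam_swap: "(\<Sum>i\<in>Lam L. g (snd i, fst i)) = (\<Sum>i\<in>Lam L. g i)"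
proof -
  have "prod.swap ` Lam L = Lam L" unfolding Lam_def by auto
  then show ?thesis using sum.reindex[of prod.swap "Lam L" g] by (simp add: prod.swap_def)
qed

lemma sum_horizontal_bond_energy:
  assumes "\<eta> \<in> configs L" "1 \<le> L"
  shows "(\<Sum>i\<in>Lam L. horizontal_bond_energy L \<eta> i) = 2 * (\<Sum>y\<in>{1..int L}. row_energy L \<eta> y)"
  unfolding sum_Lam_rows sum_distrib_left using sum_horizontal_bond_energy_row[OF assms]
  by (intro sum.cong) auto

lemma bond_energy_eq_row_energies:
  fixes J :: real
  assumes "\<eta> \<in> configs L" "1 \<le> L"
  shows "J / 2 * (\<Sum>p\<in>{(i, j). i \<in> Lam L \<and> j \<in> Lam L \<and> nn i j}.
            (of_int (\<eta> (fst p)) - of_int (\<eta> (snd p)))\<^sup>2)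
       + J * (\<Sum>i\<in>inner_bdry L. \<Sum>j\<in>{j. j \<notin> Lam L \<and> nn i j}. (of_int (\<eta> i))\<^sup>2)
     = J * of_int (\<Sum>y\<in>{1..int L}. row_energy L \<eta> y + row_energy L (transposed \<eta>) y)"
proof -
  define A where "A i = (\<Sum>j\<in>{j\<in>Lam L. nn i j}. (\<eta> i - \<eta> j)\<^sup>2)" for i
  define B where "B i = (\<Sum>j\<in>{j. j \<notin> Lam L \<and> nn i j}. (\<eta> i)\<^sup>2)" for i
  have "{(i, j). i \<in> Lam L \<and> j \<in> Lam L \<and> nn i j} = Sigma (Lam L) (\<lambda>i. {j\<in>Lam L. nn i j})"
    by auto
  moreover have "(\<Sum>i\<in>Lam L. \<Sum>j\<in>{j \<in> Lam L. nn i j}. (of_int (\<eta> i) - of_int (\<eta> j))\<^sup>2 :: real)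
      = (\<Sum>p\<in>Sigma (Lam L) (\<lambda>i. {j\<in>Lam L. nn i j}). (of_int (\<eta> (fst p)) - of_int (\<eta> (snd p)))\<^sup>2)"
    using sum.Sigma[of "Lam L" "\<lambda>i. {j\<in>Lam L. nn i j}" "\<lambda>i j. (of_int (\<eta> i) - of_int (\<eta> j))\<^sup>2 :: real"]
    by (simp add: case_prod_beta')
  ultimately have bulk: "(\<Sum>p\<in>{(i, j). i \<in> Lam L \<and> j \<in> Lam L \<and> nn i j}.
      (of_int (\<eta> (fst p)) - of_int (\<eta> (snd p)))\<^sup>2) = (of_int (\<Sum>i\<in>Lam L. A i) :: real)"
    unfolding A_def of_int_sum by simp
  have "B i = 0" if "i \<in> Lam L - inner_bdry L" for i
  proof -
    have "{j. j \<notin> Lam L \<and> nn i j} = {}" using that unfolding inner_bdry_def by blast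
    then show ?thesis by (simp only: B_def sum.empty)
  qed
  then have "(\<Sum>i\<in>inner_bdry L. B i) = (\<Sum>i\<in>Lam L. B i)"
    by (intro sum.mono_neutral_left) (auto simp: inner_bdry_def)
  moreover have "(\<Sum>i\<in>inner_bdry L. \<Sum>j\<in>{j. j \<notin> Lam L \<and> nn i j}. (of_int (\<eta> i))\<^sup>2)
      = (of_int (\<Sum>i\<in>inner_bdry L. B i) :: real)"
    unfolding B_def of_int_sum of_int_power ..
  ultimately have boundary: "(\<Sum>i\<in>inner_bdry L. \<Sum>j\<in>{j. j \<notin> Lam L \<and> nn i j}. (of_int (\<eta> i))\<^sup>2)
      = (of_int (\<Sum>i\<in>Lam L. B i) :: real)"
    by simp
  have "(\<Sum>i\<in>Lam L. A i + 2 * B i)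
      = (\<Sum>i\<in>Lam L. horizontal_bond_energy L \<eta> i + horizontal_bond_energy L (transposed \<eta>) (snd i, fst i))"
    unfolding A_def B_def using site_bond_energy_eq[OF assms(1)] by (intro sum.cong) auto
  also have "\<dots> = 2 * (\<Sum>y\<in>{1..int L}. row_energy L \<eta> y + row_energy L (transposed \<eta>) y)"
    using sum_horizontal_bond_energy[OF assms] sum_horizontal_bond_energy[OF transposed_configs[OF assms(1)] assms(2)]
    by (simp add: sum.distrib sum_Lam_swap[of "horizontal_bond_energy L (transposed \<eta>)"])
  finally have rows: "(\<Sum>i\<in>Lam L. A i + 2 * B i)
      = 2 * (\<Sum>y\<in>{1..int L}. row_energy L \<eta> y + row_energy L (transposed \<eta>) y)" .
  have "J / 2 * of_int (\<Sum>i\<in>Lam L. A i) + J * of_int (\<Sum>i\<in>Lam L. B i)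
      = J / 2 * of_int (\<Sum>i\<in>Lam L. A i + 2 * B i)"
    by (simp add: sum.distrib sum_distrib_left algebra_simps)
  also have "\<dots> = J * of_int (\<Sum>y\<in>{1..int L}. row_energy L \<eta> y + row_energy L (transposed \<eta>) y)"
    unfolding rows by simp
  finally show ?thesis unfolding bulk boundary .
qed

definition zero_sites :: "nat \<Rightarrow> (site \<Rightarrow> int) \<Rightarrow> site set" where
  "zero_sites L \<eta> = {i\<in>Lam L. \<eta> i = 0}"

definition row_excess :: "nat \<Rightarrow> (site \<Rightarrow> int) \<Rightarrow> int" where
  "row_excess L \<eta> = (\<Sum>y\<in>{1..int L}. row_energy L \<eta> y - 2)"

text \<open>The part of \<open>Ham\<close> that is not determined by the number of pluses, with \<open>d = lam - h\<close>.\<close>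
definition reduced_energy :: "nat \<Rightarrow> real \<Rightarrow> real \<Rightarrow> (site \<Rightarrow> int) \<Rightarrow> real" where
  "reduced_energy L J d \<eta> =
     J * of_int (row_excess L \<eta> + row_excess L (transposed \<eta>)) + d * real (card (zero_sites L \<eta>))"

lemma field_energy_eq:
  assumes "\<eta> \<in> configs L"
  shows "lam * (\<Sum>i\<in>Lam L. (of_int (\<eta> i))\<^sup>2) + h * (\<Sum>i\<in>Lam L. of_int (\<eta> i))
    = (lam - h) * real (L * L) - (lam - h) * real (card (zero_sites L \<eta>)) + 2 * h * real (card (plus_sites L \<eta>))"
proof -
  have site: "lam * (of_int (\<eta> i))\<^sup>2 + h * of_int (\<eta> i)
      = (lam - h) - (lam - h) * (if \<eta> i = 0 then 1 else 0) + 2 * h * (if \<eta> i = 1 then 1 else 0)"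
    if "i \<in> Lam L" for i
  proof -
    have "\<eta> i \<in> {-1, 0, 1}" using assms that unfolding configs_def by auto
    then show ?thesis by (auto simp: algebra_simps)
  qed
  have "lam * (\<Sum>i\<in>Lam L. (of_int (\<eta> i))\<^sup>2) + h * (\<Sum>i\<in>Lam L. of_int (\<eta> i))
      = (\<Sum>i\<in>Lam L. lam * (of_int (\<eta> i))\<^sup>2 + h * of_int (\<eta> i))"
    by (simp add: sum_distrib_left sum.distrib)
  also have "\<dots> = (\<Sum>i\<in>Lam L. (lam - h) - (lam - h) * (if \<eta> i = 0 then 1 else 0) + 2 * h * (if \<eta> i = 1 then 1 else 0))"
    using site by (intro sum.cong) auto
  also have "\<dots> = (lam - h) * card (Lam L) - (lam - h) * card (zero_sites L \<eta>) + 2 * h * card (plus_sites L \<eta>)"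
    by (simp add: sum.distrib sum_subtractf sum_distrib_left[symmetric] zero_sites_def plus_sites_def
        sum.inter_filter[symmetric])
  finally show ?thesis by (simp add: card_Lam)
qed

lemma Ham_eq_reduced_energy:
  assumes "\<eta> \<in> configs L" "1 \<le> L"
  shows "Ham L J lam h \<eta> = reduced_energy L J (lam - h) \<eta>
    + (4 * L * J + (h - lam) * real (L * L) - 2 * h * real (card (plus_sites L \<eta>)))"
proof -
  have "of_int (\<Sum>y\<in>{1..int L}. row_energy L \<eta> y + row_energy L (transposed \<eta>) y)
      = of_int (row_excess L \<eta> + row_excess L (transposed \<eta>)) + 4 * real L"
    by (simp add: row_excess_def sum.distrib sum_subtractf)
  then have "J * of_int (\<Sum>y\<in>{1..int L}. row_energy L \<eta> y + row_energy L (transposed \<eta>) y)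
      = J * of_int (row_excess L \<eta> + row_excess L (transposed \<eta>)) + 4 * real L * J"
    by (simp add: algebra_simps)
  then show ?thesis
    using field_energy_eq[OF assms(1), of lam h]
      minus_diff_eq[of lam h, symmetric, THEN arg_cong[where f = "\<lambda>c. c * real (L * L)"]]
    unfolding Ham_def bond_energy_eq_row_energies[OF assms] reduced_energy_def
    by (simp only: mult_minus_left)
qed

lemma Ham_le_iff_reduced_energy_le:
  assumes "\<eta> \<in> configs L" "\<xi> \<in> configs L" "1 \<le> L" "card (plus_sites L \<eta>) = card (plus_sites L \<xi>)"
  shows "Ham L J lam h \<eta> \<le> Ham L J lam h \<xi> \<longleftrightarrow> reduced_energy L J (lam - h) \<eta> \<le> reduced_energy L J (lam - h) \<xi>"
  using assms(4) by (simp add: Ham_eq_reduced_energy[OF assms(1,3)] Ham_eq_reduced_energy[OF assms(2,3)])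

lemma Mn_iff: "\<eta> \<in> Mn L n \<longleftrightarrow> \<eta> \<in> configs L \<and> card (plus_sites L \<eta>) = n"
  unfolding Mn_def plus_sites_def by simp

lemma nat_in_range: "x \<in> {1..int L} \<Longrightarrow> 1 \<le> nat x \<and> nat x \<le> L \<and> int (nat x) = x"
  by auto

lemma row_spin_line: "\<eta> \<in> configs L \<Longrightarrow> y \<in> {1..int L} \<Longrightarrow> spin_line (\<lambda>x. \<eta> (int x, y)) L"
  unfolding spin_line_def configs_def Lam_def by auto

lemma row_energy_nonneg: "0 \<le> row_energy L \<eta> y"
  unfolding row_energy_def by (rule line_energy_nonneg)

lemma row_energy_ge_2:
  assumes "\<eta> \<in> configs L" "y \<in> {1..int L}" "x \<in> {1..int L}" "\<eta> (x, y) \<noteq> 0"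
  shows "2 \<le> row_energy L \<eta> y"
  unfolding row_energy_def using spin_line_energy_ge_2[OF row_spin_line[OF assms(1,2)], of "nat x"]
    nat_in_range[OF assms(3)] assms(4) by auto

lemma row_energy_ge_4:
  assumes "\<eta> \<in> configs L" "y \<in> {1..int L}" "a \<in> {1..int L}" "\<eta> (a, y) = 1" "b \<in> {1..int L}" "\<eta> (b, y) = -1"
  shows "4 \<le> row_energy L \<eta> y"
  unfolding row_energy_def using spin_line_energy_ge_4[OF row_spin_line[OF assms(1,2)], of "nat a" "nat b"]
    nat_in_range[OF assms(3)] nat_in_range[OF assms(5)] assms by auto

lemma row_energy_ge_5_if_no_zero:
  assumes "\<eta> \<in> configs L" "y \<in> {1..int L}" "a \<in> {1..int L}" "\<eta> (a, y) = 1" "b \<in> {1..int L}" "\<eta> (b, y) = -1"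
    and "\<And>x. x \<in> {1..int L} \<Longrightarrow> \<eta> (x, y) \<noteq> 0"
  shows "5 \<le> row_energy L \<eta> y"
proof -
  have "\<eta> (int x, y) \<noteq> 0" if "1 \<le> x" "x \<le> L" for x using assms(7) that by auto
  then show ?thesis
    unfolding row_energy_def using spin_line_energy_ge_5_if_no_zero[OF row_spin_line[OF assms(1,2)], of "nat a" "nat b"]
      nat_in_range[OF assms(3)] nat_in_range[OF assms(5)] assms(4,6) by auto
qed

lemma row_plus_convex:
  assumes "\<eta> \<in> configs L" "y \<in> {1..int L}" "row_energy L \<eta> y \<le> 4" "m \<in> {1..int L}" "\<eta> (m, y) = -1"
    "x1 \<in> {1..int L}" "x3 \<in> {1..int L}" "\<eta> (x1, y) = 1" "\<eta> (x3, y) = 1" "x1 < x2" "x2 < x3"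
  shows "\<eta> (x2, y) = 1"
proof (rule ccontr)
  assume "\<eta> (x2, y) \<noteq> 1"
  moreover have "x2 \<in> {1..int L}" "nat x1 < nat x2" "nat x2 < nat x3" using assms by auto
  ultimately have "5 \<le> row_energy L \<eta> y"
    unfolding row_energy_def
    using spin_line_energy_ge_5_if_plus_gap[OF row_spin_line[OF assms(1,2)], of "nat x1" "nat x2" "nat x3" "nat m"]
      nat_in_range[OF assms(4)] nat_in_range[OF assms(6)] nat_in_range[OF assms(7)] assms(5,8,9) by auto
  then show False using assms(3) by simp
qed

lemma finite_plus_sites [simp]: "finite (plus_sites L \<eta>)"
  unfolding plus_sites_def by simp

lemma finite_zero_sites [simp]: "finite (zero_sites L \<eta>)"
  unfolding zero_sites_def by simp

lemma plus_sites_rows: "snd ` plus_sites L \<eta> \<subseteq> {1..int L}"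
  unfolding plus_sites_def Lam_def by auto

lemma plus_sites_transposed: "plus_sites L (transposed \<eta>) = prod.swap ` plus_sites L \<eta>"
  unfolding plus_sites_def Lam_def by (auto simp: image_iff)

lemma card_plus_sites_transposed: "card (plus_sites L (transposed \<eta>)) = card (plus_sites L \<eta>)"
  unfolding plus_sites_transposed by (simp add: card_image)

lemma card_zero_sites_transposed: "card (zero_sites L (transposed \<eta>)) = card (zero_sites L \<eta>)"
proof -
  have "zero_sites L (transposed \<eta>) = prod.swap ` zero_sites L \<eta>"
    unfolding zero_sites_def Lam_def by (auto simp: image_iff)
  then show ?thesis by (simp add: card_image)
qed

lemma sum_if_mem: "finite A \<Longrightarrow> W \<subseteq> A \<Longrightarrow> (\<Sum>y\<in>A. if y \<in> W then c else 0) = c * int (card W)"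
  by (simp add: sum.If_cases Int_absorb1 mult.commute)

definition empty_rows :: "nat \<Rightarrow> (site \<Rightarrow> int) \<Rightarrow> int set" where
  "empty_rows L \<eta> = {y\<in>{1..int L}. \<forall>x\<in>{1..int L}. \<eta> (x, y) = 0}"

definition row_has_minus :: "nat \<Rightarrow> (site \<Rightarrow> int) \<Rightarrow> int \<Rightarrow> bool" where
  "row_has_minus L \<eta> y \<longleftrightarrow> (\<exists>x\<in>{1..int L}. \<eta> (x, y) = -1)"

text \<open>Rows meeting the plus set with energy 4, the least possible for a row containing a minus.\<close>
definition tight_rows :: "nat \<Rightarrow> (site \<Rightarrow> int) \<Rightarrow> int set" where
  "tight_rows L \<eta> = {y\<in>snd ` plus_sites L \<eta>. row_energy L \<eta> y \<le> 4}"

lemma row_excess_ge_empty_rows: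
  assumes "\<eta> \<in> configs L"
  shows "- 2 * int (card (empty_rows L \<eta>)) \<le> row_excess L \<eta>"
proof -
  have "(\<Sum>y\<in>{1..int L}. if y \<in> empty_rows L \<eta> then -2 else 0) \<le> row_excess L \<eta>"
    unfolding row_excess_def
  proof (rule sum_mono)
    fix y assume y: "y \<in> {1..int L}"
    show "(if y \<in> empty_rows L \<eta> then -2 else 0) \<le> row_energy L \<eta> y - 2"
    proof (cases "y \<in> empty_rows L \<eta>")
      case False
      then obtain x where "x \<in> {1..int L}" "\<eta> (x, y) \<noteq> 0" using y unfolding empty_rows_def by auto
      then show ?thesis using row_energy_ge_2[OF assms y] False by auto
    qed (simp add: row_energy_nonneg)
  qed
  moreover have "(\<Sum>y\<in>{1..int L}. if y \<in> empty_rows L \<eta> then -2 else 0) = - 2 * int (card (empty_rows L \<eta>))"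
    by (rule sum_if_mem) (auto simp: empty_rows_def)
  ultimately show ?thesis by linarith
qed

lemma card_empty_rows_le: "L * card (empty_rows L \<eta>) \<le> card (zero_sites L \<eta>)"
proof -
  have "{1..int L} \<times> empty_rows L \<eta> \<subseteq> zero_sites L \<eta>"
    unfolding empty_rows_def zero_sites_def Lam_def by auto
  then have "card ({1..int L} \<times> empty_rows L \<eta>) \<le> card (zero_sites L \<eta>)" by (intro card_mono) auto
  then show ?thesis by (simp add: card_cartesian_product)
qed

lemma card_plus_zero_ge_if_row_without_minus:
  assumes "\<eta> \<in> configs L" "y \<in> {1..int L}" "\<not> row_has_minus L \<eta> y"
  shows "L \<le> card (plus_sites L \<eta>) + card (zero_sites L \<eta>)"
proof -
  have "(x, y) \<in> plus_sites L \<eta> \<union> zero_sites L \<eta>" if "x \<in> {1..int L}" for x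
  proof -
    have "(x, y) \<in> Lam L" using that assms(2) unfolding Lam_def by auto
    moreover from this have "\<eta> (x, y) \<in> {-1, 0, 1}" using assms(1) unfolding configs_def by auto
    moreover have "\<eta> (x, y) \<noteq> -1" using assms(3) that unfolding row_has_minus_def by auto
    ultimately show ?thesis unfolding plus_sites_def zero_sites_def by auto
  qed
  then have "(\<lambda>x. (x, y)) ` {1..int L} \<subseteq> plus_sites L \<eta> \<union> zero_sites L \<eta>" by (rule image_subsetI)
  then have "card ((\<lambda>x. (x, y)) ` {1..int L}) \<le> card (plus_sites L \<eta> \<union> zero_sites L \<eta>)"
    by (intro card_mono) auto
  moreover have "card ((\<lambda>x. (x, y)) ` {1..int L}) = L" by (subst card_image) (auto simp: inj_on_def)
  ultimately show ?thesis using card_Un_le[of "plus_sites L \<eta>" "zero_sites L \<eta>"] by linarith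
qed

lemma row_excess_ge_if_rows_have_minus:
  assumes "\<eta> \<in> configs L" "\<forall>y\<in>{1..int L}. row_has_minus L \<eta> y"
  shows "3 * int (card (snd ` plus_sites L \<eta>)) - int (card (tight_rows L \<eta>)) \<le> row_excess L \<eta>"
proof -
  let ?R = "snd ` plus_sites L \<eta>"
  have "(\<Sum>y\<in>{1..int L}. (if y \<in> ?R then 3 else 0) + (if y \<in> tight_rows L \<eta> then -1 else 0)) \<le> row_excess L \<eta>"
    unfolding row_excess_def
  proof (rule sum_mono)
    fix y assume y: "y \<in> {1..int L}"
    obtain m where m: "m \<in> {1..int L}" "\<eta> (m, y) = -1"
      using assms(2) y unfolding row_has_minus_def by blast
    show "(if y \<in> ?R then 3 else 0) + (if y \<in> tight_rows L \<eta> then -1 else 0) \<le> row_energy L \<eta> y - 2"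
    proof (cases "y \<in> ?R")
      case True
      then obtain a where "(a, y) \<in> plus_sites L \<eta>" by force
      then have "a \<in> {1..int L}" "\<eta> (a, y) = 1" unfolding plus_sites_def Lam_def by auto
      then have "4 \<le> row_energy L \<eta> y" using row_energy_ge_4[OF assms(1) y _ _ m] by blast
      then show ?thesis using True unfolding tight_rows_def by auto
    next
      case False
      then show ?thesis using row_energy_ge_2[OF assms(1) y m(1)] m(2) unfolding tight_rows_def by auto
    qed
  qed
  moreover have "tight_rows L \<eta> \<subseteq> {1..int L}" using plus_sites_rows unfolding tight_rows_def by blast
  then have "(\<Sum>y\<in>{1..int L}. (if y \<in> ?R then 3 else 0) + (if y \<in> tight_rows L \<eta> then -1 else 0))
      = 3 * int (card ?R) + (- 1) * int (card (tight_rows L \<eta>))"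
    unfolding sum.distrib
    by (simp only: sum_if_mem[OF finite_atLeastAtMost_int plus_sites_rows] sum_if_mem[OF finite_atLeastAtMost_int])
  ultimately show ?thesis by linarith
qed

lemma tight_row_has_zero:
  assumes "\<eta> \<in> configs L" "y \<in> tight_rows L \<eta>" "row_has_minus L \<eta> y"
  shows "\<exists>x\<in>{1..int L}. \<eta> (x, y) = 0"
proof (rule ccontr)
  assume no_zero: "\<not> ?thesis"
  obtain a where "(a, y) \<in> plus_sites L \<eta>" using assms(2) unfolding tight_rows_def by force
  then have a: "a \<in> {1..int L}" "\<eta> (a, y) = 1" and y: "y \<in> {1..int L}"
    unfolding plus_sites_def Lam_def by auto
  obtain m where "m \<in> {1..int L}" "\<eta> (m, y) = -1" using assms(3) unfolding row_has_minus_def by auto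
  then have "5 \<le> row_energy L \<eta> y"
    using row_energy_ge_5_if_no_zero[OF assms(1) y a] no_zero by blast
  then show False using assms(2) unfolding tight_rows_def by auto
qed

section \<open>Lower bound for the reduced energy\<close>

lemma four_mult_le_sum_power2: "4 * (r * c) \<le> (r + c)\<^sup>2" for r c :: int
  using zero_le_power2[of "r - c"] by (simp add: power2_eq_square algebra_simps)

lemma sides_sum_ge_of_area:
  fixes r c l :: int
  assumes "0 \<le> r" "0 \<le> c" "l \<ge> 2" "l * (l - 1) \<le> r * c"
  shows "2 * l - 1 \<le> r + c"
proof (rule ccontr)
  assume "\<not> ?thesis"
  then have "(r + c)\<^sup>2 \<le> (2 * l - 2)\<^sup>2" using assms by (intro power_mono) auto
  then have "4 * (l * (l - 1)) \<le> (2 * l - 2)\<^sup>2" using four_mult_le_sum_power2[of r c] assms(4) by linarith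
  then show False using assms(3) by (simp add: power2_eq_square algebra_simps)
qed

lemma area_le_of_sides_sum:
  fixes r c l :: int
  assumes "r + c = 2 * l - 1"
  shows "r * c \<le> l * (l - 1)"
proof -
  have "4 * (r * c) \<le> (2 * l - 1)\<^sup>2" using four_mult_le_sum_power2[of r c] assms by simp
  also have "\<dots> = 4 * (l * (l - 1)) + 1" by (simp add: power2_eq_square algebra_simps)
  finally show ?thesis by linarith
qed

lemma quasi_square_sides:
  fixes r c l :: int
  assumes "r + c = 2 * l - 1" "r * c = l * (l - 1)"
  shows "r = l \<and> c = l - 1 \<or> r = l - 1 \<and> c = l"
proof -
  have "(r - l) * (r - (l - 1)) = 0" using assms by (simp add: algebra_simps) algebra
  then show ?thesis using assms(1) by auto
qed

text \<open>The arithmetic core of the lower bound: \<open>r\<close>, \<open>c\<close> count the rows and columns met by the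
  pluses, \<open>tr\<close>, \<open>tc\<close> the tight ones, \<open>SR\<close>, \<open>SC\<close>, \<open>z\<close> bound the row and column excess and the
  number of zeros, and \<open>k\<close> counts zeros shared by a tight row and a tight column.\<close>
lemma line_count_energy_bound:
  fixes r c tr tc k z SR SC l :: int and J d :: real
  assumes d: "0 < d" "d < J" "d * l < 2 * J + d" and l: "l \<ge> 2" and area: "l * (l - 1) + k \<le> r * c"
    and k: "0 \<le> k" "k \<le> tr" "tr \<le> r" "k \<le> tc" "tc \<le> c"
    and S: "3 * r - tr \<le> SR" "3 * c - tc \<le> SC" "tr + tc - k \<le> z"
  shows "(2 * J + d) * (2 * l - 1) \<le> J * (SR + SC) + d * z"
    and "J * (SR + SC) + d * z \<le> (2 * J + d) * (2 * l - 1) \<Longrightarrow>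
      r + c = 2 * l - 1 \<and> tr = r \<and> tc = c \<and> r * c = l * (l - 1)"
proof -
  define s where "s = r + c"
  define t where "t = tr + tc"
  have ts: "t \<le> s" "2 * k \<le> s" unfolding t_def s_def using k by auto
  have "J * (3 * s - t) \<le> J * (SR + SC)" using S d unfolding s_def t_def by (intro mult_left_mono) auto
  moreover have "d * (t - k) \<le> d * z" using S d unfolding t_def by (intro mult_left_mono) auto
  ultimately have F: "2 * J * s + (J - d) * (s - t) + d * s - d * k \<le> J * (SR + SC) + d * z"
    by (simp add: algebra_simps)
  have JD: "0 \<le> (J - d) * (s - t)" using d ts by simp
  have s_ge: "2 * l - 1 \<le> s" unfolding s_def using sides_sum_ge_of_area[of r c l] area k l by linarith
  have strict: "(2 * J + d) * (2 * l - 1) < J * (SR + SC) + d * z" if "2 * l \<le> s"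
  proof -
    have "(2 * J + d) * (2 * l - 1) < (2 * J + d / 2) * (2 * l)"
      using d by (simp add: algebra_simps)
    also have "\<dots> \<le> (2 * J + d / 2) * s" using that d by (intro mult_left_mono) auto
    also have "\<dots> \<le> 2 * J * s + d * s - d * k"
    proof -
      have "real_of_int k \<le> s / 2" using ts(2) by simp
      then have "d * k \<le> d * (s / 2)" using d by (intro mult_left_mono) auto
      then show ?thesis by (simp add: algebra_simps)
    qed
    finally show ?thesis using F JD by linarith
  qed
  have tight: "k = 0 \<and> r * c = l * (l - 1) \<and> (2 * J + d) * (2 * l - 1) + (J - d) * (s - t) \<le> J * (SR + SC) + d * z"
    if "s = 2 * l - 1"
  proof -
    have "r * c \<le> l * (l - 1)" using area_le_of_sides_sum that unfolding s_def by blast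
    then have k0: "k = 0" "r * c = l * (l - 1)" using area k by auto
    have s: "real_of_int s = 2 * real_of_int l - 1" using that by simp
    have "(2 * J + d) * (2 * l - 1) = 2 * J * s + d * s" unfolding s by (simp add: algebra_simps)
    then show ?thesis using F k0 by simp
  qed
  show "(2 * J + d) * (2 * l - 1) \<le> J * (SR + SC) + d * z"
    using strict tight JD s_ge by (cases "s = 2 * l - 1") force+
  assume le: "J * (SR + SC) + d * z \<le> (2 * J + d) * (2 * l - 1)"
  then have s: "s = 2 * l - 1" using strict s_ge by force
  then have "(J - d) * (s - t) \<le> 0" using tight le by linarith
  then have "s - t \<le> 0" using d by (smt (verit) mult_pos_pos of_int_pos)
  then show "r + c = 2 * l - 1 \<and> tr = r \<and> tc = c \<and> r * c = l * (l - 1)"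
    using s tight k unfolding s_def t_def by auto
qed

lemma plus_sites_subset_lines: "plus_sites L \<eta> \<subseteq> fst ` plus_sites L \<eta> \<times> snd ` plus_sites L \<eta>"
  by force

lemma tight_columns_subset: "tight_rows L (transposed \<eta>) \<subseteq> fst ` plus_sites L \<eta>"
  unfolding tight_rows_def plus_sites_transposed by (auto simp: image_image)

text \<open>Every tight row and every tight column contains a zero; a zero can be shared by a tight row
  and a tight column only at a site outside the plus set but inside its bounding rows and columns.\<close>
lemma card_tight_lines_le_zeros:
  assumes cfg: "\<eta> \<in> configs L"
    and minus: "\<forall>y\<in>{1..int L}. row_has_minus L \<eta> y" "\<forall>x\<in>{1..int L}. row_has_minus L (transposed \<eta>) x"
  obtains k where "k \<le> card (tight_rows L \<eta>)" "k \<le> card (tight_rows L (transposed \<eta>))"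
    "k + card (plus_sites L \<eta>) \<le> card (fst ` plus_sites L \<eta>) * card (snd ` plus_sites L \<eta>)"
    "card (tight_rows L \<eta>) + card (tight_rows L (transposed \<eta>)) \<le> card (zero_sites L \<eta>) + k"
proof -
  define P where "P = plus_sites L \<eta>"
  define Tr where "Tr = tight_rows L \<eta>"
  define Tc where "Tc = tight_rows L (transposed \<eta>)"
  have Tr_sub: "Tr \<subseteq> snd ` P" unfolding Tr_def P_def tight_rows_def by auto
  have Tc_sub: "Tc \<subseteq> fst ` P" unfolding Tc_def P_def by (rule tight_columns_subset)
  have lines: "fst ` P \<subseteq> {1..int L}" "snd ` P \<subseteq> {1..int L}" unfolding P_def plus_sites_def Lam_def by auto
  have "\<forall>y\<in>Tr. \<exists>x. x \<in> {1..int L} \<and> \<eta> (x, y) = 0"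
    using tight_row_has_zero[OF cfg] minus(1) Tr_sub lines unfolding Tr_def by blast
  then obtain zr where zr: "\<And>y. y \<in> Tr \<Longrightarrow> zr y \<in> {1..int L} \<and> \<eta> (zr y, y) = 0" by metis
  have "\<forall>x\<in>Tc. \<exists>y. y \<in> {1..int L} \<and> \<eta> (x, y) = 0"
    using tight_row_has_zero[OF transposed_configs[OF cfg]] minus(2) Tc_sub lines unfolding Tc_def by fastforce
  then obtain zc where zc: "\<And>x. x \<in> Tc \<Longrightarrow> zc x \<in> {1..int L} \<and> \<eta> (x, zc x) = 0" by metis
  define Zr where "Zr = (\<lambda>y. (zr y, y)) ` Tr"
  define Zc where "Zc = (\<lambda>x. (x, zc x)) ` Tc"
  have fin: "finite Tr" "finite Tc" "finite Zr" "finite Zc" "finite (fst ` P)" "finite (snd ` P)"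
    using finite_subset[OF Tr_sub] finite_subset[OF Tc_sub] unfolding Zr_def Zc_def P_def by auto
  have card_Zr: "card Zr = card Tr" unfolding Zr_def by (rule card_image) (auto simp: inj_on_def)
  have card_Zc: "card Zc = card Tc" unfolding Zc_def by (rule card_image) (auto simp: inj_on_def)
  have Z: "Zr \<union> Zc \<subseteq> zero_sites L \<eta>"
    using zr zc Tr_sub Tc_sub lines unfolding Zr_def Zc_def zero_sites_def Lam_def by fastforce
  have "Zr \<inter> Zc \<subseteq> (fst ` P \<times> snd ` P) - P"
    using Z Tr_sub Tc_sub unfolding Zr_def Zc_def P_def plus_sites_def zero_sites_def by fastforce
  then have "card (Zr \<inter> Zc) \<le> card (fst ` P \<times> snd ` P) - card P"
    using card_mono[of "(fst ` P \<times> snd ` P) - P"] card_Diff_subset[OF _ plus_sites_subset_lines[of L \<eta>]] fin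
    unfolding P_def by fastforce
  moreover have "card P \<le> card (fst ` P \<times> snd ` P)"
    using card_mono[OF _ plus_sites_subset_lines[of L \<eta>]] fin unfolding P_def by simp
  moreover have "card (Zr \<union> Zc) + card (Zr \<inter> Zc) = card Zr + card Zc" using fin by (intro card_Un_Int[symmetric])
  moreover have "card (Zr \<union> Zc) \<le> card (zero_sites L \<eta>)" using Z by (intro card_mono) auto
  moreover have "card (Zr \<inter> Zc) \<le> card Zr" "card (Zr \<inter> Zc) \<le> card Zc" using fin by (auto intro: card_mono)
  ultimately show ?thesis
    using that[of "card (Zr \<inter> Zc)"] card_Zr card_Zc
    unfolding P_def Tr_def Tc_def card_cartesian_product by linarith
qed

lemma int_set_eq_interval_if_convex:
  fixes S :: "int set"
  assumes "finite S" "S \<noteq> {}"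
    and convex: "\<And>x1 x2 x3. x1 \<in> S \<Longrightarrow> x3 \<in> S \<Longrightarrow> x1 < x2 \<Longrightarrow> x2 < x3 \<Longrightarrow> x2 \<in> S"
  shows "S = {Min S..Min S + int (card S) - 1}"
proof -
  have mi: "Min S \<in> S" and ma: "Max S \<in> S" using assms by auto
  have S: "S = {Min S..Max S}"
  proof
    show "S \<subseteq> {Min S..Max S}" using assms(1) by auto
    show "{Min S..Max S} \<subseteq> S"
    proof
      fix x assume "x \<in> {Min S..Max S}"
      then show "x \<in> S" using convex[OF mi ma, of x] mi ma by (cases "x = Min S \<or> x = Max S") auto
    qed
  qed
  have "card S = nat (Max S - Min S + 1)" by (subst S) simp
  moreover have "Min S \<le> Max S" using assms by simp
  ultimately have "Max S = Min S + int (card S) - 1" by linarith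
  then show ?thesis using S by simp
qed

lemma fst_plus_sites_convex:
  assumes cfg: "\<eta> \<in> configs L" and minus: "\<forall>y\<in>{1..int L}. row_has_minus L \<eta> y"
    and product: "plus_sites L \<eta> = fst ` plus_sites L \<eta> \<times> snd ` plus_sites L \<eta>"
    and tight: "snd ` plus_sites L \<eta> \<subseteq> tight_rows L \<eta>"
    and x: "x1 \<in> fst ` plus_sites L \<eta>" "x3 \<in> fst ` plus_sites L \<eta>" "x1 < x2" "x2 < x3"
  shows "x2 \<in> fst ` plus_sites L \<eta>"
proof -
  obtain y where "(x1, y) \<in> plus_sites L \<eta>" using x(1) by force
  then have "y \<in> snd ` plus_sites L \<eta>" by force
  then have P: "(x1, y) \<in> plus_sites L \<eta>" "(x3, y) \<in> plus_sites L \<eta>" and "row_energy L \<eta> y \<le> 4"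
    using x product tight unfolding tight_rows_def by blast+
  moreover have y: "y \<in> {1..int L}" and "x1 \<in> {1..int L}" "x3 \<in> {1..int L}"
    using P unfolding plus_sites_def Lam_def by auto
  moreover obtain m where "m \<in> {1..int L}" "\<eta> (m, y) = -1" using minus y unfolding row_has_minus_def by blast
  ultimately have "\<eta> (x2, y) = 1" using row_plus_convex[OF cfg y] x unfolding plus_sites_def by blast
  moreover have "(x2, y) \<in> Lam L" using P x y unfolding plus_sites_def Lam_def by auto
  ultimately show ?thesis unfolding plus_sites_def by force
qed

lemma plus_sites_eq_site_rect:
  assumes cfg: "\<eta> \<in> configs L"
    and minus: "\<forall>y\<in>{1..int L}. row_has_minus L \<eta> y" "\<forall>x\<in>{1..int L}. row_has_minus L (transposed \<eta>) x"
    and product: "plus_sites L \<eta> = fst ` plus_sites L \<eta> \<times> snd ` plus_sites L \<eta>"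
    and tight: "tight_rows L \<eta> = snd ` plus_sites L \<eta>" "tight_rows L (transposed \<eta>) = fst ` plus_sites L \<eta>"
    and nonempty: "plus_sites L \<eta> \<noteq> {}"
  defines "C \<equiv> fst ` plus_sites L \<eta>" and "R \<equiv> snd ` plus_sites L \<eta>"
  shows "plus_sites L \<eta> = site_rect (Min C) (Min R) (int (card C)) (int (card R))"
proof -
  have swap: "fst ` plus_sites L (transposed \<eta>) = R" "snd ` plus_sites L (transposed \<eta>) = C"
    unfolding plus_sites_transposed R_def C_def by (simp_all add: image_image)
  have "plus_sites L \<eta> = C \<times> R" using product unfolding C_def R_def .
  then have product': "plus_sites L (transposed \<eta>) = R \<times> C"
    unfolding plus_sites_transposed by (simp add: product_swap)
  have "C = {Min C..Min C + int (card C) - 1}"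
  proof (rule int_set_eq_interval_if_convex)
    show "finite C" "C \<noteq> {}" using nonempty unfolding C_def by auto
    show "x2 \<in> C" if "x1 \<in> C" "x3 \<in> C" "x1 < x2" "x2 < x3" for x1 x2 x3
      using fst_plus_sites_convex[OF cfg minus(1) product equalityD2[OF tight(1)]] that unfolding C_def .
  qed
  moreover have "R = {Min R..Min R + int (card R) - 1}"
  proof (rule int_set_eq_interval_if_convex)
    show "finite R" "R \<noteq> {}" using nonempty unfolding R_def by auto
    show "y2 \<in> R" if "y1 \<in> R" "y3 \<in> R" "y1 < y2" "y2 < y3" for y1 y2 y3
      using fst_plus_sites_convex[OF transposed_configs[OF cfg] minus(2), of y1 y3 y2] that
        product' tight(2) unfolding swap C_def by simp
  qed
  ultimately show ?thesis using product unfolding site_rect_def C_def R_def by simp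
qed

lemma reduced_energy_bound_if_lines_have_minus:
  fixes J d :: real and l :: int
  assumes cfg: "\<eta> \<in> configs L"
    and minus: "\<forall>y\<in>{1..int L}. row_has_minus L \<eta> y" "\<forall>x\<in>{1..int L}. row_has_minus L (transposed \<eta>) x"
    and d: "0 < d" "d < J" "d * l < 2 * J + d" and l: "l \<ge> 2"
    and card_plus: "int (card (plus_sites L \<eta>)) = l * (l - 1)"
  shows "(2 * J + d) * (2 * l - 1) \<le> reduced_energy L J d \<eta>"
    and "reduced_energy L J d \<eta> \<le> (2 * J + d) * (2 * l - 1) \<Longrightarrow> quasi_square_l l (plus_sites L \<eta>)"
proof -
  define P where "P = plus_sites L \<eta>"
  define C where "C = fst ` P"
  define R where "R = snd ` P"
  define Tr where "Tr = tight_rows L \<eta>"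
  define Tc where "Tc = tight_rows L (transposed \<eta>)"
  obtain k where k: "k \<le> card Tr" "k \<le> card Tc" "k + card P \<le> card C * card R"
    "card Tr + card Tc \<le> card (zero_sites L \<eta>) + k"
    using card_tight_lines_le_zeros[OF cfg minus] unfolding P_def C_def R_def Tr_def Tc_def .
  have fin: "finite C" "finite R" unfolding C_def R_def P_def by auto
  have Tr_sub: "Tr \<subseteq> R" unfolding Tr_def R_def P_def tight_rows_def by auto
  have Tc_sub: "Tc \<subseteq> C" unfolding Tc_def C_def P_def by (rule tight_columns_subset)
  have T: "card Tr \<le> card R" "card Tc \<le> card C" using card_mono[OF fin(2) Tr_sub] card_mono[OF fin(1) Tc_sub] .
  have SR: "3 * int (card R) - int (card Tr) \<le> row_excess L \<eta>"
    using row_excess_ge_if_rows_have_minus[OF cfg minus(1)] unfolding R_def P_def Tr_def .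
  have SC: "3 * int (card C) - int (card Tc) \<le> row_excess L (transposed \<eta>)"
    using row_excess_ge_if_rows_have_minus[OF transposed_configs[OF cfg] minus(2)]
    unfolding plus_sites_transposed Tc_def C_def P_def by (simp add: image_image)
  note bound = line_count_energy_bound[OF d l, of k "int (card R)" "int (card C)" "int (card Tr)" "int (card Tc)"
      "row_excess L \<eta>" "row_excess L (transposed \<eta>)" "int (card (zero_sites L \<eta>))"]
  have hyps: "l * (l - 1) + int k \<le> int (card R) * int (card C)" "0 \<le> int k" "int k \<le> int (card Tr)"
      "int (card Tr) \<le> int (card R)" "int k \<le> int (card Tc)" "int (card Tc) \<le> int (card C)"
      "int (card Tr) + int (card Tc) - int k \<le> int (card (zero_sites L \<eta>))"
    using k T card_plus unfolding P_def by (simp_all add: algebra_simps flip: of_nat_mult of_nat_add)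
  have energy: "reduced_energy L J d \<eta>
      = J * (row_excess L \<eta> + row_excess L (transposed \<eta>)) + d * of_int (int (card (zero_sites L \<eta>)))"
    unfolding reduced_energy_def by simp
  show "(2 * J + d) * (2 * l - 1) \<le> reduced_energy L J d \<eta>"
    unfolding energy using bound(1)[OF hyps(1-6) SR SC hyps(7)] .
  assume "reduced_energy L J d \<eta> \<le> (2 * J + d) * (2 * l - 1)"
  then have eqs: "int (card R) + int (card C) = 2 * l - 1" "card Tr = card R" "card Tc = card C"
      "int (card R) * int (card C) = l * (l - 1)"
    using bound(2)[OF hyps(1-6) SR SC hyps(7)] unfolding energy by auto
  have "Tr = R" "Tc = C" using card_subset_eq[OF fin(2) Tr_sub] card_subset_eq[OF fin(1) Tc_sub] eqs by auto
  moreover have "P = C \<times> R"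
  proof (rule card_subset_eq)
    show "P \<subseteq> C \<times> R" unfolding C_def R_def P_def by (rule plus_sites_subset_lines)
    show "card P = card (C \<times> R)" using eqs(4) card_plus unfolding P_def card_cartesian_product
      by (simp add: mult.commute flip: of_nat_mult)
  qed (use fin in simp)
  moreover have "P \<noteq> {}" using card_plus l unfolding P_def by auto
  ultimately have rect: "P = site_rect (Min C) (Min R) (int (card C)) (int (card R))"
    using plus_sites_eq_site_rect[OF cfg minus] unfolding P_def C_def R_def Tr_def Tc_def by blast
  from quasi_square_sides[OF eqs(1,4)] show "quasi_square_l l (plus_sites L \<eta>)"
  proof
    assume "int (card R) = l \<and> int (card C) = l - 1"
    then have "P = site_rect (Min C) (Min R) (l - 1) l" using rect by simp
    then show ?thesis unfolding quasi_square_l_def P_def by blast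
  next
    assume "int (card R) = l - 1 \<and> int (card C) = l"
    then have "P = site_rect (Min C) (Min R) l (l - 1)" using rect by simp
    then show ?thesis unfolding quasi_square_l_def P_def by blast
  qed
qed

lemma reduced_energy_ge_if_empty_line:
  fixes J d :: real
  assumes cfg: "\<eta> \<in> configs L" and Jd: "0 \<le> J" "0 < d" "4 * J \<le> d * L"
    and empty: "empty_rows L \<eta> \<noteq> {} \<or> empty_rows L (transposed \<eta>) \<noteq> {}"
  shows "d * L / 2 - 2 * J \<le> reduced_energy L J d \<eta>"
proof -
  define w where "w = real (card (empty_rows L \<eta>) + card (empty_rows L (transposed \<eta>)))"
  have "finite (empty_rows L \<eta>)" "finite (empty_rows L (transposed \<eta>))"
    unfolding empty_rows_def by (auto intro: finite_subset[of _ "{1..int L}"])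
  then have "0 < card (empty_rows L \<eta>) + card (empty_rows L (transposed \<eta>))"
    using empty by (auto simp: card_gt_0_iff)
  then have w: "1 \<le> w" unfolding w_def by linarith
  have "- 2 * int (card (empty_rows L \<eta>) + card (empty_rows L (transposed \<eta>)))
      \<le> row_excess L \<eta> + row_excess L (transposed \<eta>)"
    using row_excess_ge_empty_rows[OF cfg] row_excess_ge_empty_rows[OF transposed_configs[OF cfg]] by simp
  then have "real_of_int (- 2 * int (card (empty_rows L \<eta>) + card (empty_rows L (transposed \<eta>))))
      \<le> of_int (row_excess L \<eta> + row_excess L (transposed \<eta>))"
    by (simp only: of_int_le_iff)
  then have "- 2 * w \<le> of_int (row_excess L \<eta> + row_excess L (transposed \<eta>))"
    unfolding w_def by simp
  then have "J * (- 2 * w) \<le> J * of_int (row_excess L \<eta> + row_excess L (transposed \<eta>))"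
    using Jd by (intro mult_left_mono) auto
  moreover have "real L * w \<le> 2 * card (zero_sites L \<eta>)"
    using card_empty_rows_le[of L \<eta>] card_empty_rows_le[of L "transposed \<eta>"]
    unfolding w_def card_zero_sites_transposed distrib_left of_nat_add[symmetric] of_nat_mult[symmetric]
    by linarith
  then have "d * (real L * w) / 2 \<le> d * card (zero_sites L \<eta>)" using Jd by simp
  ultimately have "w * (d * L / 2 - 2 * J) \<le> reduced_energy L J d \<eta>"
    unfolding reduced_energy_def by (simp add: algebra_simps)
  moreover have "1 * (d * L / 2 - 2 * J) \<le> w * (d * L / 2 - 2 * J)"
    using w Jd by (intro mult_right_mono) auto
  ultimately show ?thesis by simp
qed

lemma reduced_energy_ge_if_line_without_minus:
  fixes J d :: real
  assumes cfg: "\<eta> \<in> configs L" and Jd: "0 \<le> J" "0 \<le> d"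
    and no_empty: "empty_rows L \<eta> = {}" "empty_rows L (transposed \<eta>) = {}"
    and y: "y \<in> {1..int L}" "\<not> row_has_minus L \<eta> y \<or> \<not> row_has_minus L (transposed \<eta>) y"
  shows "d * (real L - card (plus_sites L \<eta>)) \<le> reduced_energy L J d \<eta>"
proof -
  have "L \<le> card (plus_sites L \<eta>) + card (zero_sites L \<eta>)"
    using y card_plus_zero_ge_if_row_without_minus[OF cfg y(1)]
      card_plus_zero_ge_if_row_without_minus[OF transposed_configs[OF cfg] y(1)]
    unfolding card_plus_sites_transposed card_zero_sites_transposed by blast
  then have "d * (real L - card (plus_sites L \<eta>)) \<le> d * card (zero_sites L \<eta>)"
    using Jd by (intro mult_left_mono) auto
  moreover have "0 \<le> row_excess L \<eta> + row_excess L (transposed \<eta>)"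
    using row_excess_ge_empty_rows[OF cfg] row_excess_ge_empty_rows[OF transposed_configs[OF cfg]] no_empty
    by simp
  then have "0 \<le> J * of_int (row_excess L \<eta> + row_excess L (transposed \<eta>))" using Jd by simp
  ultimately show ?thesis unfolding reduced_energy_def by linarith
qed

text \<open>The two hypotheses on \<open>L\<close> exclude an empty line and a line without minus.\<close>
lemma reduced_energy_lower_bound:
  fixes J d :: real and l :: int
  assumes cfg: "\<eta> \<in> configs L"
    and d: "0 < d" "d < J" "d * l < 2 * J + d" and l: "l \<ge> 2"
    and card_plus: "int (card (plus_sites L \<eta>)) = l * (l - 1)"
    and large: "(2 * J + d) * (2 * l - 1) < d * L / 2 - 2 * J"
      "(2 * J + d) * (2 * l - 1) < d * (L - l * (l - 1))"
  shows "(2 * J + d) * (2 * l - 1) \<le> reduced_energy L J d \<eta>"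
    and "reduced_energy L J d \<eta> \<le> (2 * J + d) * (2 * l - 1) \<Longrightarrow> quasi_square_l l (plus_sites L \<eta>)"
proof -
  have "0 < (2 * J + d) * (2 * l - 1)" using d l by (intro mult_pos_pos) auto
  consider "empty_rows L \<eta> \<noteq> {} \<or> empty_rows L (transposed \<eta>) \<noteq> {}"
    | y where "empty_rows L \<eta> = {}" "empty_rows L (transposed \<eta>) = {}" "y \<in> {1..int L}"
        "\<not> row_has_minus L \<eta> y \<or> \<not> row_has_minus L (transposed \<eta>) y"
    | "\<forall>y\<in>{1..int L}. row_has_minus L \<eta> y" "\<forall>x\<in>{1..int L}. row_has_minus L (transposed \<eta>) x"
    by blast
  then have "(2 * J + d) * (2 * l - 1) < reduced_energy L J d \<eta> \<or>
      (2 * J + d) * (2 * l - 1) \<le> reduced_energy L J d \<eta> \<and>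
      (reduced_energy L J d \<eta> \<le> (2 * J + d) * (2 * l - 1) \<longrightarrow> quasi_square_l l (plus_sites L \<eta>))"
  proof cases
    case 1
    then show ?thesis using reduced_energy_ge_if_empty_line[OF cfg _ d(1), of J] d large
      \<open>0 < (2 * J + d) * (2 * l - 1)\<close> by fastforce
  next
    case 2
    then have "d * (real L - card (plus_sites L \<eta>)) \<le> reduced_energy L J d \<eta>"
      using reduced_energy_ge_if_line_without_minus[OF cfg, of J d] d by simp
    moreover have "real_of_int (int L - l * (l - 1)) = real L - card (plus_sites L \<eta>)"
      unfolding card_plus[symmetric] by simp
    ultimately show ?thesis using large(2) by simp
  next
    case 3
    then show ?thesis using reduced_energy_bound_if_lines_have_minus[OF cfg _ _ d l card_plus] by blast
  qed
  then show "(2 * J + d) * (2 * l - 1) \<le> reduced_energy L J d \<eta>"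
    and "reduced_energy L J d \<eta> \<le> (2 * J + d) * (2 * l - 1) \<Longrightarrow> quasi_square_l l (plus_sites L \<eta>)"
    by auto
qed

section \<open>The quasi-square configuration\<close>

definition quasi_square_config :: "nat \<Rightarrow> int \<Rightarrow> site \<Rightarrow> int" where
  "quasi_square_config L l = (\<lambda>(x, y).
     if (x, y) \<notin> Lam L then 0
     else if 1 \<le> x \<and> x \<le> l \<and> 1 \<le> y \<and> y \<le> l - 1 then 1
     else if x = l + 1 \<and> 1 \<le> y \<and> y \<le> l - 1 \<or> 1 \<le> x \<and> x \<le> l \<and> y = l then 0
     else -1)"

lemma quasi_square_config_configs: "quasi_square_config L l \<in> configs L"
proof -
  have "quasi_square_config L l i \<in> {-1, 0, 1}" "i \<notin> Lam L \<Longrightarrow> quasi_square_config L l i = 0" for i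
    by (cases i; simp add: quasi_square_config_def)+
  then show ?thesis unfolding configs_def by blast
qed

lemma plus_sites_quasi_square_config:
  assumes "l + 2 \<le> int L"
  shows "plus_sites L (quasi_square_config L l) = {1..l} \<times> {1..l - 1}"
  using assms by (auto simp: plus_sites_def quasi_square_config_def Lam_def split: if_splits)

lemma zero_sites_quasi_square_config:
  assumes "l + 2 \<le> int L" "l \<ge> 2"
  shows "zero_sites L (quasi_square_config L l) = {l + 1} \<times> {1..l - 1} \<union> {1..l} \<times> {l}"
  using assms by (auto simp: zero_sites_def quasi_square_config_def Lam_def split: if_splits)

lemma card_plus_sites_quasi_square_config:
  assumes "l + 2 \<le> int L" "l \<ge> 2"
  shows "int (card (plus_sites L (quasi_square_config L l))) = l * (l - 1)"
  using assms by (simp add: plus_sites_quasi_square_config card_cartesian_product)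

lemma card_zero_sites_quasi_square_config:
  assumes "l + 2 \<le> int L" "l \<ge> 2"
  shows "int (card (zero_sites L (quasi_square_config L l))) = 2 * l - 1"
proof -
  have "card ({l + 1} \<times> {1..l - 1} \<union> {1..l} \<times> {l}) = card ({l + 1} \<times> {1..l - 1}) + card ({1..l} \<times> {l})"
    by (rule card_Un_disjoint) auto
  then show ?thesis using assms by (simp add: zero_sites_quasi_square_config card_cartesian_product)
qed

lemma quasi_square_config_Mn:
  assumes "l \<ge> 2" "l + 2 \<le> int L"
  shows "quasi_square_config L l \<in> Mn L (nat (l * (l - 1)))"
  using card_plus_sites_quasi_square_config[OF assms(2,1)] quasi_square_config_configs
  unfolding Mn_iff by (metis nat_int)

lemma row_energy_quasi_square_config:
  assumes "l \<ge> 2" "l + 2 \<le> int L" "y \<in> {1..int L}"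
  shows "row_energy L (quasi_square_config L l) y = (if y \<le> l - 1 then 4 else 2)"
proof -
  define f where "f x = quasi_square_config L l (int x, y)" for x
  have f: "f 0 = 0" "f (Suc L) = 0" unfolding f_def quasi_square_config_def Lam_def by simp_all
  consider "y \<le> l - 1" | "y = l" | "l < y" by linarith
  then show ?thesis
  proof cases
    case 1
    have "line_energy f 0 (Suc L) = 2 * 1\<^sup>2 + 2 * (-1)\<^sup>2"
    proof (rule line_energy_two_steps[where p = "nat l"])
      show "\<And>x. 1 \<le> x \<Longrightarrow> x \<le> nat l \<Longrightarrow> f x = 1" "f (Suc (nat l)) = 0"
        "\<And>x. Suc (nat l) < x \<Longrightarrow> x \<le> L \<Longrightarrow> f x = -1"
        using assms 1 unfolding f_def quasi_square_config_def Lam_def by auto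
    qed (use assms f in auto)
    then show ?thesis using 1 unfolding row_energy_def f_def by simp
  next
    case 2
    have "line_energy f 0 (Suc L) = 2 * (-1)\<^sup>2"
    proof (rule line_energy_one_step[where p = "nat l"])
      show "\<And>x. x \<le> nat l \<Longrightarrow> f x = 0" "\<And>x. nat l < x \<Longrightarrow> x \<le> L \<Longrightarrow> f x = -1"
        using assms 2 unfolding f_def quasi_square_config_def Lam_def by auto
    qed (use assms f in auto)
    then show ?thesis using 2 unfolding row_energy_def f_def by simp
  next
    case 3
    have "line_energy f 0 (Suc L) = 2 * (-1)\<^sup>2"
    proof (rule line_energy_one_step[where p = 0])
      show "\<And>x. 0 < x \<Longrightarrow> x \<le> L \<Longrightarrow> f x = -1"
        using assms 3 unfolding f_def quasi_square_config_def Lam_def by auto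
    qed (use assms f in auto)
    then show ?thesis using 3 unfolding row_energy_def f_def by simp
  qed
qed

lemma column_energy_quasi_square_config:
  assumes "l \<ge> 2" "l + 2 \<le> int L" "x \<in> {1..int L}"
  shows "row_energy L (transposed (quasi_square_config L l)) x = (if x \<le> l then 4 else 2)"
proof -
  define f where "f y = quasi_square_config L l (x, int y)" for y
  have f: "f 0 = 0" "f (Suc L) = 0" unfolding f_def quasi_square_config_def Lam_def by simp_all
  have column: "(\<lambda>y. transposed (quasi_square_config L l) (int y, x)) = f" unfolding f_def by simp
  consider "x \<le> l" | "x = l + 1" | "l + 1 < x" by linarith
  then show ?thesis
  proof cases
    case 1
    have "line_energy f 0 (Suc L) = 2 * 1\<^sup>2 + 2 * (-1)\<^sup>2"
    proof (rule line_energy_two_steps[where p = "nat (l - 1)"])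
      show "\<And>y. 1 \<le> y \<Longrightarrow> y \<le> nat (l - 1) \<Longrightarrow> f y = 1" "f (Suc (nat (l - 1))) = 0"
        "\<And>y. Suc (nat (l - 1)) < y \<Longrightarrow> y \<le> L \<Longrightarrow> f y = -1"
        using assms 1 unfolding f_def quasi_square_config_def Lam_def by auto
    qed (use assms f in auto)
    then show ?thesis using 1 unfolding row_energy_def column by simp
  next
    case 2
    have "line_energy f 0 (Suc L) = 2 * (-1)\<^sup>2"
    proof (rule line_energy_one_step[where p = "nat (l - 1)"])
      show "\<And>y. y \<le> nat (l - 1) \<Longrightarrow> f y = 0" "\<And>y. nat (l - 1) < y \<Longrightarrow> y \<le> L \<Longrightarrow> f y = -1"
        using assms 2 unfolding f_def quasi_square_config_def Lam_def by auto
    qed (use assms f in auto)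
    then show ?thesis using 2 unfolding row_energy_def column by simp
  next
    case 3
    have "line_energy f 0 (Suc L) = 2 * (-1)\<^sup>2"
    proof (rule line_energy_one_step[where p = 0])
      show "\<And>y. 0 < y \<Longrightarrow> y \<le> L \<Longrightarrow> f y = -1"
        using assms 3 unfolding f_def quasi_square_config_def Lam_def by auto
    qed (use assms f in auto)
    then show ?thesis using 3 unfolding row_energy_def column by simp
  qed
qed

lemma reduced_energy_quasi_square_config:
  assumes "l \<ge> 2" "l + 2 \<le> int L"
  shows "reduced_energy L J d (quasi_square_config L l) = (2 * J + d) * (2 * l - 1)"
proof -
  let ?\<xi> = "quasi_square_config L l"
  have "(\<Sum>y\<in>{1..int L}. row_energy L ?\<xi> y + row_energy L (transposed ?\<xi>) y)
     = (\<Sum>y\<in>{1..int L}. 4 + (if y \<in> {1..l - 1} then 2 else 0) + (if y \<in> {1..l} then 2 else 0))"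
    using row_energy_quasi_square_config[OF assms] column_energy_quasi_square_config[OF assms] assms
    by (intro sum.cong) auto
  also have "\<dots> = 4 * int L + 2 * int (card {1..l - 1}) + 2 * int (card {1..l})"
  proof -
    have "(\<Sum>y\<in>{1..int L}. if y \<in> {1..l - 1} then 2 else 0) = 2 * int (card {1..l - 1})"
      "(\<Sum>y\<in>{1..int L}. if y \<in> {1..l} then 2 else 0) = 2 * int (card {1..l})"
      using assms by (intro sum_if_mem; auto)+
    then show ?thesis unfolding sum.distrib by simp
  qed
  finally have "row_excess L ?\<xi> + row_excess L (transposed ?\<xi>) = 4 * l - 2"
    using assms by (simp add: row_excess_def sum.distrib sum_subtractf)
  then have lines: "real_of_int (row_excess L ?\<xi> + row_excess L (transposed ?\<xi>)) = 4 * real_of_int l - 2"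
    by simp
  have "int (card (zero_sites L ?\<xi>)) = 2 * l - 1"
    using card_zero_sites_quasi_square_config[OF assms(2,1)] .
  then have zeros: "real (card (zero_sites L ?\<xi>)) = 2 * real_of_int l - 1"
    by (metis of_int_of_nat_eq of_int_diff of_int_mult of_int_numeral of_int_1)
  show ?thesis unfolding reduced_energy_def lines zeros by (simp add: algebra_simps)
qed

section \<open>Clusters of a rectangle of pluses\<close>

lemma exists_int_near:
  fixes t :: real and a m :: int
  assumes "m \<ge> 1" "of_int a - 1 / 2 \<le> t" "t \<le> of_int (a + m - 1) + 1 / 2"
  shows "\<exists>x\<in>{a..a + m - 1}. \<bar>t - of_int x\<bar> \<le> 1 / 2"
proof -
  define x where "x = min (a + m - 1) \<lfloor>t + 1 / 2\<rfloor>"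
  have floor: "of_int \<lfloor>t + 1 / 2\<rfloor> \<le> t + 1 / 2" "t + 1 / 2 < of_int \<lfloor>t + 1 / 2\<rfloor> + 1" by linarith+
  have "a \<le> \<lfloor>t + 1 / 2\<rfloor>" using assms(2) by (simp add: le_floor_iff)
  then have "x \<in> {a..a + m - 1}" unfolding x_def using assms(1) by auto
  moreover have "\<bar>t - of_int x\<bar> \<le> 1 / 2"
  proof (cases "\<lfloor>t + 1 / 2\<rfloor> \<le> a + m - 1")
    case True
    then have "x = \<lfloor>t + 1 / 2\<rfloor>" unfolding x_def by simp
    then show ?thesis using floor by linarith
  next
    case False
    then have "x = a + m - 1" unfolding x_def by simp
    moreover have "a + m \<le> \<lfloor>t + 1 / 2\<rfloor>" using False by linarith
    then have "of_int (a + m) \<le> t + 1 / 2" using le_floor_iff by blast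
    ultimately show ?thesis using assms(3) by simp
  qed
  ultimately show ?thesis by blast
qed

definition site_rect_box :: "int \<Rightarrow> int \<Rightarrow> int \<Rightarrow> int \<Rightarrow> (real \<times> real) set" where
  "site_rect_box a b m k =
     {of_int a - 1 / 2..of_int (a + m - 1) + 1 / 2} \<times> {of_int b - 1 / 2..of_int (b + k - 1) + 1 / 2}"

lemma usq_subset_site_rect_box:
  assumes "(x, y) \<in> site_rect a b m k"
  shows "usq (x, y) \<subseteq> site_rect_box a b m k"
proof
  fix p assume "p \<in> usq (x, y)"
  then have "\<bar>fst p - of_int x\<bar> \<le> 1 / 2" "\<bar>snd p - of_int y\<bar> \<le> 1 / 2" unfolding usq_def by auto
  moreover have "(of_int a :: real) \<le> of_int x" "(of_int x :: real) \<le> of_int (a + m - 1)"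
    "(of_int b :: real) \<le> of_int y" "(of_int y :: real) \<le> of_int (b + k - 1)"
    using assms unfolding site_rect_def by auto
  ultimately show "p \<in> site_rect_box a b m k"
    unfolding site_rect_box_def mem_Times_iff atLeastAtMost_iff abs_le_iff by linarith
qed

lemma UN_usq_site_rect:
  assumes "m \<ge> 1" "k \<ge> 1"
  shows "(\<Union>i\<in>site_rect a b m k. usq i) = site_rect_box a b m k"
proof
  show "(\<Union>i\<in>site_rect a b m k. usq i) \<subseteq> site_rect_box a b m k" using usq_subset_site_rect_box by force
  show "site_rect_box a b m k \<subseteq> (\<Union>i\<in>site_rect a b m k. usq i)"
  proof
    fix p assume "p \<in> site_rect_box a b m k"
    then have p: "of_int a - 1 / 2 \<le> fst p" "fst p \<le> of_int (a + m - 1) + 1 / 2"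
      "of_int b - 1 / 2 \<le> snd p" "snd p \<le> of_int (b + k - 1) + 1 / 2"
      unfolding site_rect_box_def by auto
    obtain x where "x \<in> {a..a + m - 1}" "\<bar>fst p - of_int x\<bar> \<le> 1 / 2"
      using exists_int_near[OF assms(1) p(1,2)] by blast
    moreover obtain y where "y \<in> {b..b + k - 1}" "\<bar>snd p - of_int y\<bar> \<le> 1 / 2"
      using exists_int_near[OF assms(2) p(3,4)] by blast
    ultimately have "(x, y) \<in> site_rect a b m k" "p \<in> usq (x, y)" unfolding site_rect_def usq_def by auto
    then show "p \<in> (\<Union>i\<in>site_rect a b m k. usq i)" by blast
  qed
qed

lemma cluster_sites_eq_site_rect:
  assumes "plus_sites L \<eta> = site_rect a b m k" "m \<ge> 1" "k \<ge> 1" "C \<in> clusters L \<eta>"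
  shows "cluster_sites L \<eta> C = site_rect a b m k"
proof -
  have region: "plus_region L \<eta> = site_rect_box a b m k"
    unfolding plus_region_def assms(1) using UN_usq_site_rect[OF assms(2,3)] .
  have "connected (site_rect_box a b m k)"
    unfolding site_rect_box_def by (intro convex_connected convex_Times) auto
  then have "C = site_rect_box a b m k"
    using assms(4) connected_component_eq_self unfolding clusters_def region by auto
  then show ?thesis unfolding cluster_sites_def assms(1) using usq_subset_site_rect_box[of _ _ a b m k] by force
qed

lemma quasi_square_cluster_sites:
  assumes "quasi_square_l l (plus_sites L \<eta>)" "l \<ge> 2" "C \<in> clusters L \<eta>"
  shows "quasi_square_l l (cluster_sites L \<eta> C)"
  using assms cluster_sites_eq_site_rect[of L \<eta> _ _ l "l - 1" C] cluster_sites_eq_site_rect[of L \<eta> _ _ "l - 1" l C]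
  unfolding quasi_square_l_def by fastforce

section \<open>Consequences of Condition (C)\<close>

lemma l_c_floor_bounds:
  "(2 * J + (lam - h)) / (2 * h) < l_c J lam h" "l_c J lam h \<le> (2 * J + (lam - h)) / (2 * h) + 1"
  unfolding l_c_def by (simp_all add: algebra_simps) linarith+

lemma l_c_estimates:
  fixes J lam h d :: real
  assumes h: "0 < h" "lam / 2 < h" "h < lam" and J: "h + 3 * (lam - h) + 1 \<le> J"
  defines "d \<equiv> lam - h"
  shows "2 \<le> l_c J lam h" "d * l_c J lam h < 2 * J + d" "l_c J lam h < J / d + 3 / 2"
proof -
  have d: "0 < d" "d < h" "0 < J" using h J unfolding d_def by auto
  have "1 \<le> (2 * J + d) / (2 * h)" using d J unfolding d_def by (simp add: field_simps)
  then show "2 \<le> l_c J lam h" using l_c_floor_bounds(1)[of J lam h] unfolding d_def by linarith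
  have "d * (2 * J + d) < h * (4 * J)"
  proof -
    have "d * (2 * J + d) \<le> d * (4 * J)" using d J unfolding d_def by (intro mult_left_mono) auto
    also have "\<dots> < h * (4 * J)" using d by (intro mult_strict_right_mono) auto
    finally show ?thesis .
  qed
  then have "d * ((2 * J + d) / (2 * h) + 1) < 2 * J + d" using h by (simp add: field_simps)
  moreover have "d * l_c J lam h \<le> d * ((2 * J + d) / (2 * h) + 1)"
    using l_c_floor_bounds(2)[of J lam h] d unfolding d_def by (intro mult_left_mono) auto
  ultimately show "d * l_c J lam h < 2 * J + d" by linarith
  have "(2 * J + d) / (2 * h) < (2 * J + d) / (2 * d)" using d by (intro divide_strict_left_mono) auto
  also have "\<dots> = J / d + 1 / 2" using d by (simp add: field_simps)
  finally show "l_c J lam h < J / d + 3 / 2" using l_c_floor_bounds(2)[of J lam h] unfolding d_def by linarith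
qed

text \<open>With \<open>J = Q d\<close>, the condition \<open>L > (2 J / d)^3\<close> of (C) makes \<open>L\<close> large enough to exclude
  empty lines and lines without minus at the critical size.\<close>
lemma large_box_estimates:
  fixes Q d :: real and l :: int
  assumes Q: "3 \<le> Q" and d: "0 < d" and l: "2 \<le> l" "l < Q + 3 / 2" and L: "8 * Q ^ 3 < real L"
  shows "(2 * (Q * d) + d) * (2 * l - 1) < d * L / 2 - 2 * (Q * d)"
    and "(2 * (Q * d) + d) * (2 * l - 1) < d * (L - l * (l - 1))"
    and "l + 2 \<le> int L"
proof -
  have cube: "3 * Q \<le> Q * Q" "3 * (Q * Q) \<le> Q * Q * Q" "8 * (Q * Q * Q) < real L"
    using Q L mult_right_mono[of 3 Q Q] mult_left_mono[of 3 Q "Q * Q"] by (auto simp: power3_eq_cube algebra_simps)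
  have A: "(2 * (Q * d) + d) * (2 * l - 1) \<le> d * ((2 * Q + 1) * (2 * Q + 2))"
  proof -
    have "(2 * (Q * d) + d) * (2 * l - 1) \<le> (2 * (Q * d) + d) * (2 * Q + 2)"
      using l d Q by (intro mult_left_mono) auto
    then show ?thesis by (simp add: algebra_simps)
  qed
  have expand: "(2 * Q + 1) * (2 * Q + 2) = 4 * (Q * Q) + 6 * Q + 2" "(Q + 3 / 2) * (Q + 1 / 2) = Q * Q + 2 * Q + 3 / 4"
    by (simp_all add: algebra_simps field_simps)
  have "(2 * Q + 1) * (2 * Q + 2) + 2 * Q < real L / 2" using cube Q unfolding expand by linarith
  then have "d * ((2 * Q + 1) * (2 * Q + 2) + 2 * Q) < d * (real L / 2)" using d by (intro mult_strict_left_mono)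
  then show "(2 * (Q * d) + d) * (2 * l - 1) < d * L / 2 - 2 * (Q * d)" using A by (simp add: algebra_simps)
  have "real_of_int l * (real_of_int l - 1) \<le> (Q + 3 / 2) * (real_of_int l - 1)" using l by (intro mult_right_mono) auto
  also have "\<dots> < (Q + 3 / 2) * (Q + 1 / 2)" using l Q by (intro mult_strict_left_mono) auto
  finally have "real_of_int (l * (l - 1)) < (Q + 3 / 2) * (Q + 1 / 2)" by simp
  moreover have "(2 * Q + 1) * (2 * Q + 2) < real L - (Q + 3 / 2) * (Q + 1 / 2)"
    using cube Q unfolding expand by linarith
  ultimately have "d * ((2 * Q + 1) * (2 * Q + 2)) < d * (real L - real_of_int (l * (l - 1)))"
    using d by (intro mult_strict_left_mono) auto
  then show "(2 * (Q * d) + d) * (2 * l - 1) < d * (L - l * (l - 1))" using A by simp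
  have "Q + 4 < real L" using cube Q by linarith
  then have "real_of_int (l + 2) < real L" using l by simp
  then show "l + 2 \<le> int L" by linarith
qed

lemma minimizer_plus_sites_quasi_square:
  fixes lam h J :: real
  assumes h: "0 < h" "lam / 2 < h" "h < lam" and J: "h + 3 * (lam - h) + 1 \<le> J"
    and C: "cond_C_rest L J lam h" and min: "is_minimizer_on L J lam h (Mn L (n_c_plus J lam h)) \<eta>"
  shows "quasi_square_l (l_c J lam h) (plus_sites L \<eta>)"
proof -
  define l d Q where "l = l_c J lam h" and "d = lam - h" and "Q = J / d"
  have d: "0 < d" "d < J" and JQ: "J = Q * d" and Q: "3 \<le> Q" and "8 * Q ^ 3 < real L"
    using h J C unfolding d_def Q_def cond_C_rest_def by (auto simp: field_simps power_mult_distrib)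
  note l = l_c_estimates[OF h J, folded d_def l_def]
  note large = large_box_estimates[OF Q d(1) l(1) l(3)[folded Q_def] \<open>8 * Q ^ 3 < real L\<close>, folded JQ]
  have n: "n_c_plus J lam h = nat (l * (l - 1))" unfolding n_c_plus_def l_def ..
  have \<eta>: "\<eta> \<in> Mn L (n_c_plus J lam h)" using min unfolding is_minimizer_on_def by blast
  then have cfg: "\<eta> \<in> configs L" and card_plus: "int (card (plus_sites L \<eta>)) = l * (l - 1)"
    using l(1) unfolding Mn_iff n by auto
  have L: "1 \<le> L" using large(3) l(1) by linarith
  let ?\<xi> = "quasi_square_config L l"
  have \<xi>: "?\<xi> \<in> Mn L (n_c_plus J lam h)" unfolding n using quasi_square_config_Mn[OF l(1) large(3)] .
  then have "Ham L J lam h \<eta> \<le> Ham L J lam h ?\<xi>" using min unfolding is_minimizer_on_def by blast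
  then have "reduced_energy L J d \<eta> \<le> reduced_energy L J d ?\<xi>"
    using Ham_le_iff_reduced_energy_le[OF cfg _ L] \<xi> \<eta> unfolding Mn_iff d_def by simp
  then show ?thesis
    using reduced_energy_lower_bound(2)[OF cfg d l(2) l(1) card_plus large(1,2)]
      reduced_energy_quasi_square_config[OF l(1) large(3)] unfolding l_def by simp
qed

theorem lemma4p10:
  fixes lam h :: real
  assumes "0 < h" and "lam / 2 < h" and "h < lam"
  shows "\<exists>J0. \<forall>J L \<eta>. J \<ge> J0 \<longrightarrow> cond_C_rest L J lam h \<longrightarrow>
            \<eta> \<in> Mn L (n_c_plus J lam h) \<longrightarrow>
            (\<exists>C\<in>clusters L \<eta>. \<not> quasi_square_l (l_c J lam h) (cluster_sites L \<eta> C)) \<longrightarrow>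
            \<not> is_minimizer_on L J lam h (Mn L (n_c_plus J lam h)) \<eta>"
proof (intro exI[of _ "h + 3 * (lam - h) + 1"] allI impI notI)
  fix J L \<eta>
  assume J: "J \<ge> h + 3 * (lam - h) + 1" and C: "cond_C_rest L J lam h"
    and bad: "\<exists>C\<in>clusters L \<eta>. \<not> quasi_square_l (l_c J lam h) (cluster_sites L \<eta> C)"
    and min: "is_minimizer_on L J lam h (Mn L (n_c_plus J lam h)) \<eta>"
  have "quasi_square_l (l_c J lam h) (plus_sites L \<eta>)"
    using minimizer_plus_sites_quasi_square[OF assms J C min] .
  then show False using bad quasi_square_cluster_sites l_c_estimates(1)[OF assms J] by blast
qed

end
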